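(* Let $n\ge 2$, let $F_2$ be the free group on $a,b$, $T=[a,b]$, and let $R_{\mathrm{Heis}_n}$ be the kernel of the surjection $F_2\to H_n$, $a\mapsto\alpha$, $b\mapsto\beta$. Then $R_{\mathrm{Heis}_n}$ is a free group freely generated by the union of the following sets: $A_1=\{T^k (a^n)^{b^i}T^{-k}: 0\le i,k\le n-1\}$ ($n^2$ elements), $A_2=\{T^k (b^n)^{a^i}T^{-k}: 0\le i,k\le n-1\}$ ($n^2$ elements), $A_3=\{T^{n-1}\,T^{a^ib^j}: 0\le i,j\le n-2\}$ ($(n-1)^2$ elements), $A_4=\{T^k\,T^{a^ib^j}\,T^{-(k+1)}: 0\le k,i,j\le n-2,\ (i,j)\neq(0,0)\}$ ($(n-1)^3-(n-1)$ elements), in total $n^3+1$ free generators.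
   Context: $H_n$ is the group of $3\times 3$ upper unitriangular matrices with entries in $\mathbb{Z}/n\mathbb{Z}$, with $\alpha$ the matrix with $(1,2)$-entry $1$ and other off-diagonal entries $0$, and $\beta$ the matrix with $(2,3)$-entry $1$ and other off-diagonal entries $0$. Commutator: $[x,y]=xyx^{-1}y^{-1}$. Exponent notation: $x^y=yxy^{-1}$. *)

theory Defs
  imports "HOL-Algebra.Coset" "HOL-Algebra.Generated_Groups"
begin

text \<open>A letter is a pair (generator, flag); flag True means the inverse of the generator.\<close>

type_synonym 'a word = "('a \<times> bool) list"

definition reduced :: "'a word \<Rightarrow> bool" where
  "reduced w \<longleftrightarrow> (\<forall>i. Suc i < length w \<longrightarrow>
      \<not> (fst (w ! i) = fst (w ! Suc i) \<and> snd (w ! i) \<noteq> snd (w ! Suc i)))"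

fun red_cons :: "'a \<times> bool \<Rightarrow> 'a word \<Rightarrow> 'a word" where
  "red_cons x [] = [x]"
| "red_cons x (y # ys) = (if fst x = fst y \<and> snd x \<noteq> snd y then ys else x # y # ys)"

definition word_mult :: "'a word \<Rightarrow> 'a word \<Rightarrow> 'a word" where
  "word_mult xs ys = foldr red_cons xs ys"

definition free_group :: "'a set \<Rightarrow> 'a word monoid" where
  "free_group Gens = \<lparr> carrier = {w. reduced w \<and> fst ` set w \<subseteq> Gens},
                     mult = word_mult, one = [] \<rparr>"

definition F2 :: "bool word monoid" where "F2 = free_group UNIV"
definition gen_a :: "bool word" where "gen_a = [(False, False)]"
definition gen_b :: "bool word" where "gen_b = [(True, False)]"

definition commutator :: "('a, 'b) monoid_scheme \<Rightarrow> 'a \<Rightarrow> 'a \<Rightarrow> 'a" where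
  "commutator G x y = x \<otimes>\<^bsub>G\<^esub> y \<otimes>\<^bsub>G\<^esub> inv\<^bsub>G\<^esub> x \<otimes>\<^bsub>G\<^esub> inv\<^bsub>G\<^esub> y"

text \<open>conjugate G x y is x^y = y x y^{-1}.\<close>
definition conjugate :: "('a, 'b) monoid_scheme \<Rightarrow> 'a \<Rightarrow> 'a \<Rightarrow> 'a" where
  "conjugate G x y = y \<otimes>\<^bsub>G\<^esub> x \<otimes>\<^bsub>G\<^esub> inv\<^bsub>G\<^esub> y"

definition eval_word :: "('a, 'b) monoid_scheme \<Rightarrow> 'a word \<Rightarrow> 'a" where
  "eval_word G w = foldr (\<lambda>(s, e) acc. (if e then inv\<^bsub>G\<^esub> s else s) \<otimes>\<^bsub>G\<^esub> acc) w \<one>\<^bsub>G\<^esub>"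

definition free_basis :: "('a, 'b) monoid_scheme \<Rightarrow> 'a set \<Rightarrow> bool" where
  "free_basis G S \<longleftrightarrow> S \<subseteq> carrier G \<and>
     (\<forall>w. w \<noteq> [] \<and> reduced w \<and> fst ` set w \<subseteq> S \<longrightarrow> eval_word G w \<noteq> \<one>\<^bsub>G\<^esub>)"

definition freely_generated_by :: "('a, 'b) monoid_scheme \<Rightarrow> 'a set \<Rightarrow> 'a set \<Rightarrow> bool" where
  "freely_generated_by G H S \<longleftrightarrow> generate G S = H \<and> free_basis G S"

text \<open>An upper unitriangular 3x3 matrix over Z/nZ with entries (1,2) = x, (1,3) = y, (2,3) = z
  is represented by the triple (x, y, z) with entries in {0..<n}. The product is the matrix product.\<close>

definition heis :: "nat \<Rightarrow> (int \<times> int \<times> int) monoid" where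
  "heis n = \<lparr> carrier = {0..<int n} \<times> {0..<int n} \<times> {0..<int n},
     mult = (\<lambda>(x, y, z) (x', y', z').
               ((x + x') mod int n, (y + y' + x * z') mod int n, (z + z') mod int n)),
     one = (0, 0, 0) \<rparr>"

definition heis_alpha :: "int \<times> int \<times> int" where "heis_alpha = (1, 0, 0)"
definition heis_beta :: "int \<times> int \<times> int" where "heis_beta = (0, 0, 1)"

end

(*
  The kernel R of F2 -> H_n is the fundamental group of the Cayley graph of H_n with respect to
  alpha and beta, so the Reidemeister-Schreier method applies: the graph has n^3 vertices and
  2 n^3 edges, a spanning tree has n^3 - 1 of them, and the Schreier generators of the n^3 + 1
  remaining edges freely generate R. Fix such a tree and a transversal compatible with it.
  Rewriting a loop as the sequence of non-tree edges it traverses writes it as a product of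
  Schreier generators, and every Schreier generator has an explicit expansion as a word in
  A1, ..., A4; hence the A_i generate R. Conversely,
  rewriting an element of some A_i and then expanding gives back that element as a single letter.
  Applied to a nontrivial reduced word in the A_i, this retraction shows that the word is not
  trivial in F2, so the A_i form a free basis. They are counted through the last non-tree edge of
  their rewriting, which determines the parameters i, j, k.
*)

theory Submission
  imports Defs
begin

definition letter_inv :: "'a \<times> bool \<Rightarrow> 'a \<times> bool" where
  "letter_inv x = (fst x, \<not> snd x)"

definition word_inv :: "'a word \<Rightarrow> 'a word" where
  "word_inv w = rev (map letter_inv w)"

definition reduce :: "'a word \<Rightarrow> 'a word" where
  "reduce w = foldr red_cons w []"

definition word_pow :: "'a word \<Rightarrow> nat \<Rightarrow> 'a word" where
  "word_pow u k = concat (replicate k u)"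

lemma letter_inv_letter_inv [simp]: "letter_inv (letter_inv x) = x"
  by (simp add: letter_inv_def)

lemma cancelling_letters_iff: "(fst x = fst y \<and> snd x \<noteq> snd y) \<longleftrightarrow> y = letter_inv x"
  by (cases x; cases y) (auto simp: letter_inv_def)

lemma red_cons_Cons: "red_cons x (y # ys) = (if y = letter_inv x then ys else x # y # ys)"
  by (simp only: red_cons.simps cancelling_letters_iff)

declare red_cons.simps(2) [simp del]
declare red_cons_Cons [simp]

lemma word_inv_Nil [simp]: "word_inv [] = []"
  and word_inv_Cons [simp]: "word_inv (x # w) = word_inv w @ [letter_inv x]"
  and word_inv_append [simp]: "word_inv (u @ v) = word_inv v @ word_inv u"
  and word_inv_word_inv [simp]: "word_inv (word_inv w) = w"
  and fst_set_word_inv [simp]: "fst ` set (word_inv w) = fst ` set w"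
  by (force simp: word_inv_def rev_map comp_def letter_inv_def image_iff)+

lemma word_pow_0 [simp]: "word_pow u 0 = []"
  and word_pow_Suc: "word_pow u (Suc k) = u @ word_pow u k"
  by (simp_all add: word_pow_def)

lemma word_pow_Suc': "word_pow u (Suc k) = word_pow u k @ u"
  by (induction k) (simp_all add: word_pow_Suc)

lemma reduced_Nil [simp]: "reduced []"
  and reduced_single [simp]: "reduced [x]"
  by (simp_all add: reduced_def)

lemma reduced_Cons_Cons [simp]: "reduced (x # y # w) \<longleftrightarrow> y \<noteq> letter_inv x \<and> reduced (y # w)"
proof -
  have "reduced (x # y # w) \<longleftrightarrow> \<not> (fst x = fst y \<and> snd x \<noteq> snd y) \<and> reduced (y # w)"
    unfolding reduced_def
    apply (rule iffI)
     apply (metis length_Cons nth_Cons_0 nth_Cons_Suc zero_less_Suc Suc_less_eq)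
    apply clarify
    subgoal for i by (cases i) auto
    done
  then show ?thesis using cancelling_letters_iff[of x y] by blast
qed

lemma reduced_ConsD: "reduced (x # w) \<Longrightarrow> reduced w"
  by (cases w) auto

lemma reduced_red_cons: "reduced w \<Longrightarrow> reduced (red_cons x w)"
  by (cases w) (auto dest: reduced_ConsD)

lemma reduced_reduce [simp]: "reduced (reduce w)"
  by (induction w) (simp_all add: reduce_def reduced_red_cons)

lemma reduce_Nil [simp]: "reduce [] = []"
  and reduce_Cons: "reduce (x # w) = red_cons x (reduce w)"
  and reduce_append: "reduce (u @ v) = foldr red_cons u (reduce v)"
  by (simp_all add: reduce_def)

lemma red_cons_reduced: "reduced (x # w) \<Longrightarrow> red_cons x w = x # w"
  by (cases w) auto

lemma reduce_reduced: "reduced w \<Longrightarrow> reduce w = w"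
proof (induction w)
  case (Cons x w)
  then have "reduce w = w" by (blast dest: reduced_ConsD)
  with Cons.prems show ?case by (simp add: reduce_Cons red_cons_reduced)
qed simp

lemma set_reduce_subset: "set (reduce w) \<subseteq> set w"
proof (induction w)
  case (Cons x w)
  then show ?case by (cases "reduce w") (auto simp: reduce_Cons)
qed simp

lemma reduce_cancel [simp]: "reduce (u @ x # letter_inv x # v) = reduce (u @ v)"
proof -
  have "red_cons x (red_cons (letter_inv x) r) = r" if "reduced r" for r
    using that by (cases r) (auto simp: red_cons_reduced)
  then show ?thesis by (simp add: reduce_append reduce_Cons)
qed

lemma reduce_invariant:
  assumes cancel: "\<And>u x v. f (u @ x # letter_inv x # v) = f (u @ v)"
  shows "f (reduce w) = f w"
proof -
  have red_cons: "f (u @ red_cons x r) = f (u @ x # r)" for u x r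
    using cancel[of u x] by (cases r) auto
  have "f (u @ reduce w) = f (u @ w)" for u
  proof (induction w arbitrary: u)
    case (Cons x w)
    have "f (u @ reduce (x # w)) = f ((u @ [x]) @ reduce w)"
      by (simp add: reduce_Cons red_cons)
    also have "\<dots> = f (u @ x # w)" using Cons.IH[of "u @ [x]"] by simp
    finally show ?case .
  qed simp
  from this[of "[]"] show ?thesis by simp
qed

lemma reduce_reduce [simp]: "reduce (reduce w) = reduce w"
  by (simp add: reduce_reduced)

lemma reduce_append_reduce_left [simp]: "reduce (reduce u @ v) = reduce (u @ v)"
  by (rule reduce_invariant[where f = "\<lambda>u. reduce (u @ v)"]) simp

lemma reduce_append_reduce_right [simp]: "reduce (u @ reduce v) = reduce (u @ v)"
  by (simp add: reduce_append)

lemma reduce_append_cong: "reduce u = reduce u' \<Longrightarrow> reduce v = reduce v' \<Longrightarrow> reduce (u @ v) = reduce (u' @ v')"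
  by (metis reduce_append_reduce_left reduce_append_reduce_right)

lemma reduce_word_inv_right [simp]: "reduce (u @ word_inv u @ v) = reduce v"
proof (induction u arbitrary: v)
  case (Cons x u)
  have "reduce ((x # u) @ word_inv (x # u) @ v) = red_cons x (reduce (u @ word_inv u @ letter_inv x # v))"
    by (simp add: reduce_Cons)
  also have "\<dots> = reduce ([] @ x # letter_inv x # v)" by (simp only: Cons.IH) (simp add: reduce_Cons)
  finally show ?case by (simp only: reduce_cancel) simp
qed simp

lemma reduce_word_inv_left [simp]: "reduce (word_inv u @ u @ v) = reduce v"
  using reduce_word_inv_right[of "word_inv u" v] by simp

lemma reduce_append_word_inv_right [simp]: "reduce (w @ u @ word_inv u @ v) = reduce (w @ v)"
  and reduce_append_word_inv_left [simp]: "reduce (w @ word_inv u @ u @ v) = reduce (w @ v)"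
  by (metis reduce_append_reduce_right reduce_word_inv_right reduce_word_inv_left)+

lemma reduce_append_word_inv_left_Nil [simp]: "reduce (w @ word_inv u @ u) = reduce w"
  using reduce_append_word_inv_left[of w u "[]"] by simp

lemma reduce_word_inv_right_Nil [simp]: "reduce (u @ word_inv u) = []"
  and reduce_word_inv_left_Nil [simp]: "reduce (word_inv u @ u) = []"
  using reduce_word_inv_right[of u "[]"] reduce_word_inv_left[of u "[]"] by simp_all

lemma reduce_word_inv_reduce [simp]: "reduce (word_inv (reduce u)) = reduce (word_inv u)"
  by (rule reduce_invariant[where f = "\<lambda>u. reduce (word_inv u)"]) simp

lemma reduce_word_inv_cong: "reduce u = reduce v \<Longrightarrow> reduce (word_inv u) = reduce (word_inv v)"
  by (metis reduce_word_inv_reduce)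

lemma reduced_word_inv: "reduced w \<Longrightarrow> reduced (word_inv w)"
  unfolding reduced_def
proof (intro allI impI)
  fix i assume red: "\<forall>i. Suc i < length w \<longrightarrow> \<not> (fst (w ! i) = fst (w ! Suc i) \<and> snd (w ! i) \<noteq> snd (w ! Suc i))"
    and i: "Suc i < length (word_inv w)"
  define j where "j = length w - Suc (Suc i)"
  have "Suc j < length w" and "word_inv w ! i = letter_inv (w ! Suc j)"
    and "word_inv w ! Suc i = letter_inv (w ! j)"
    using i by (auto simp: j_def word_inv_def rev_nth Suc_diff_Suc)
  with red show "\<not> (fst (word_inv w ! i) = fst (word_inv w ! Suc i) \<and>
      snd (word_inv w ! i) \<noteq> snd (word_inv w ! Suc i))"
    by (auto simp: letter_inv_def)
qed

lemma word_mult_reduce: "reduced v \<Longrightarrow> word_mult u v = reduce (u @ v)"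
  by (simp add: word_mult_def reduce_append reduce_reduced)

lemma free_group_mult: "reduced v \<Longrightarrow> u \<otimes>\<^bsub>free_group S\<^esub> v = reduce (u @ v)"
  by (simp add: free_group_def word_mult_reduce)

lemma group_free_group: "group (free_group S)"
proof (rule groupI)
  show "x \<otimes>\<^bsub>free_group S\<^esub> y \<in> carrier (free_group S)"
    if "x \<in> carrier (free_group S)" "y \<in> carrier (free_group S)" for x y
  proof -
    have "fst ` set (reduce (x @ y)) \<subseteq> fst ` set (x @ y)"
      by (rule image_mono[OF set_reduce_subset])
    also have "\<dots> \<subseteq> S" using that by (auto simp: free_group_def)
    finally have "fst ` set (reduce (x @ y)) \<subseteq> S" .
    then show ?thesis using that by (simp add: free_group_def word_mult_reduce)
  qed
  show "\<exists>y\<in>carrier (free_group S). y \<otimes>\<^bsub>free_group S\<^esub> x = \<one>\<^bsub>free_group S\<^esub>"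
    if "x \<in> carrier (free_group S)" for x
    using that by (intro bexI[of _ "word_inv x"]) (auto simp: free_group_def word_mult_reduce reduced_word_inv)
qed (auto simp: free_group_def word_mult_reduce reduce_reduced)

lemma free_group_inv: "w \<in> carrier (free_group S) \<Longrightarrow> inv\<^bsub>free_group S\<^esub> w = word_inv w"
  by (rule group.inv_equality[OF group_free_group])
    (auto simp: free_group_def word_mult_reduce reduced_word_inv)

lemma F2_carrier: "carrier F2 = {w. reduced w}"
  by (simp add: F2_def free_group_def)

interpretation F2: group F2
  unfolding F2_def by (rule group_free_group)

lemma F2_mult: "reduced v \<Longrightarrow> u \<otimes>\<^bsub>F2\<^esub> v = reduce (u @ v)"
  by (simp add: F2_def free_group_mult)

lemma F2_mult_reduce [simp]: "reduce u \<otimes>\<^bsub>F2\<^esub> reduce v = reduce (u @ v)"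
  by (simp add: F2_def free_group_mult)

lemma F2_one: "\<one>\<^bsub>F2\<^esub> = []"
  by (simp add: F2_def free_group_def)

lemma F2_inv_reduce [simp]: "inv\<^bsub>F2\<^esub> (reduce u) = reduce (word_inv u)"
proof -
  have "inv\<^bsub>F2\<^esub> (reduce u) = word_inv (reduce u)"
    unfolding F2_def by (rule free_group_inv) (simp add: free_group_def)
  also have "\<dots> = reduce (word_inv (reduce u))"
    by (rule reduce_reduced[symmetric]) (simp add: reduced_word_inv)
  finally show ?thesis by simp
qed

lemma F2_pow_reduce [simp]: "reduce u [^]\<^bsub>F2\<^esub> k = reduce (word_pow u k)"
  by (induction k) (simp_all add: F2_one word_pow_Suc')

definition word_subst :: "('a \<Rightarrow> 'b word) \<Rightarrow> 'a word \<Rightarrow> 'b word" where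
  "word_subst f w = concat (map (\<lambda>l. if snd l then word_inv (f (fst l)) else f (fst l)) w)"

lemma word_subst_Nil [simp]: "word_subst f [] = []"
  and word_subst_Cons: "word_subst f (l # w) = (if snd l then word_inv (f (fst l)) else f (fst l)) @ word_subst f w"
  and word_subst_append [simp]: "word_subst f (u @ v) = word_subst f u @ word_subst f v"
  by (simp_all add: word_subst_def)

lemma word_subst_concat_map: "word_subst f (concat (map g xs)) = concat (map (\<lambda>t. word_subst f (g t)) xs)"
  by (induction xs) simp_all

lemma word_subst_single [simp]:
  "word_subst f [(e, False)] = f e" "word_subst f [(e, True)] = word_inv (f e)"
  by (simp_all add: word_subst_def)

lemma word_subst_word_inv: "word_subst f (word_inv w) = word_inv (word_subst f w)"
  by (induction w) (auto simp: word_subst_Cons letter_inv_def)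

lemma word_subst_word_subst: "word_subst g (word_subst f w) = word_subst (\<lambda>x. word_subst g (f x)) w"
  by (induction w) (auto simp: word_subst_Cons word_subst_word_inv)

lemma word_subst_letters: "word_subst (\<lambda>s. [(s, False)]) w = w"
  by (induction w) (auto simp: word_subst_Cons letter_inv_def)

lemma fst_set_word_subst: "fst ` set (word_subst f w) \<subseteq> (\<Union>e \<in> fst ` set w. fst ` set (f e))"
proof (induction w)
  case (Cons l w)
  have "fst ` set (word_subst f (l # w)) = fst ` set (f (fst l)) \<union> fst ` set (word_subst f w)"
    by (cases "snd l") (simp_all add: word_subst_Cons image_Un)
  with Cons show ?case by auto
qed simp

lemma reduce_word_subst_reduce [simp]: "reduce (word_subst f (reduce w)) = reduce (word_subst f w)"
  by (rule reduce_invariant[where f = "\<lambda>w. reduce (word_subst f w)"])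
    (simp add: word_subst_Cons letter_inv_def)

lemma reduce_word_subst_cong:
  "(\<And>e. e \<in> fst ` set w \<Longrightarrow> reduce (f e) = reduce (g e)) \<Longrightarrow>
    reduce (word_subst f w) = reduce (word_subst g w)"
proof (induction w)
  case (Cons l w)
  then have "reduce (f (fst l)) = reduce (g (fst l))" by simp
  moreover from this have "reduce (word_inv (f (fst l))) = reduce (word_inv (g (fst l)))"
    by (rule reduce_word_inv_cong)
  ultimately have "reduce (if snd l then word_inv (f (fst l)) else f (fst l)) =
      reduce (if snd l then word_inv (g (fst l)) else g (fst l))"
    by simp
  moreover have "reduce (word_subst f w) = reduce (word_subst g w)" using Cons by simp
  ultimately show ?case unfolding word_subst_Cons by (rule reduce_append_cong)
qed simp

lemma reduce_concat_map_cong: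
  "(\<And>t. t \<in> set xs \<Longrightarrow> reduce (f t) = reduce (g t)) \<Longrightarrow>
    reduce (concat (map f xs)) = reduce (concat (map g xs))"
  by (induction xs) (auto intro: reduce_append_cong)

lemma eval_word_free_group:
  "fst ` set w \<subseteq> carrier (free_group S) \<Longrightarrow> eval_word (free_group S) w = reduce (word_subst (\<lambda>s. s) w)"
proof (induction w)
  case (Cons l w)
  obtain s e where l: "l = (s, e)" by fastforce
  with Cons.prems have s: "s \<in> carrier (free_group S)" by simp
  then have "reduced s" by (simp add: free_group_def)
  with s have "(if e then inv\<^bsub>free_group S\<^esub> s else s) = reduce (if e then word_inv s else s)"
    by (simp add: free_group_inv reduce_reduced reduced_word_inv)
  with Cons l show ?case
    by (simp add: eval_word_def free_group_mult word_subst_Cons)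
qed (simp add: eval_word_def free_group_def)

lemma eval_word_in_generate: "fst ` set w \<subseteq> S \<Longrightarrow> eval_word G w \<in> generate G S"
proof (induction w)
  case (Cons l w)
  obtain s e where l: "l = (s, e)" by fastforce
  with Cons.prems have "(if e then inv\<^bsub>G\<^esub> s else s) \<in> generate G S"
    by (simp add: generate.incl generate.inv)
  with Cons l show ?case by (simp add: eval_word_def generate.eng)
qed (simp add: eval_word_def generate.one)

section \<open>Schreier rewriting\<close>

locale schreier_graph =
  fixes V :: "'v set" and step :: "'v \<Rightarrow> 'g \<times> bool \<Rightarrow> 'v" and tree :: "'v \<times> 'g \<Rightarrow> bool"
  assumes step_closed: "v \<in> V \<Longrightarrow> step v l \<in> V"
    and step_letter_inv: "v \<in> V \<Longrightarrow> step (step v l) (letter_inv l) = v"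
begin

definition walk :: "'v \<Rightarrow> 'g word \<Rightarrow> 'v" where
  "walk v w = foldl step v w"

lemma walk_Nil [simp]: "walk v [] = v"
  and walk_Cons [simp]: "walk v (l # w) = walk (step v l) w"
  and walk_append [simp]: "walk v (u @ w) = walk (walk v u) w"
  by (simp_all add: walk_def)

lemma walk_closed: "v \<in> V \<Longrightarrow> walk v w \<in> V"
  by (induction w arbitrary: v) (simp_all add: step_closed)

lemma walk_reduce: "v \<in> V \<Longrightarrow> walk v (reduce w) = walk v w"
  by (rule reduce_invariant) (simp add: step_letter_inv walk_closed)

lemma walk_word_inv: "v \<in> V \<Longrightarrow> walk (walk v w) (word_inv w) = v"
  by (induction w arbitrary: v) (simp_all add: step_closed step_letter_inv)

text \<open>The edge \<open>(v, g)\<close> leads from \<open>v\<close> to \<open>step v (g, False)\<close>. Rewriting a word lists the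
  edges it traverses, with their directions, and omits those of the tree. Nothing in this locale
  needs the tree to be a spanning tree.\<close>

definition edge_word :: "'v \<times> 'g \<Rightarrow> ('v \<times> 'g) word" where
  "edge_word e = (if tree e then [] else [(e, False)])"

definition letter_edges :: "'v \<Rightarrow> 'g \<times> bool \<Rightarrow> ('v \<times> 'g) word" where
  "letter_edges v l =
    (if snd l then word_inv (edge_word (step v l, fst l)) else edge_word (v, fst l))"

fun schreier_rewrite :: "'v \<Rightarrow> 'g word \<Rightarrow> ('v \<times> 'g) word" where
  "schreier_rewrite v [] = []"
| "schreier_rewrite v (l # w) = letter_edges v l @ schreier_rewrite (step v l) w"

lemma schreier_rewrite_append [simp]:
  "schreier_rewrite v (u @ w) = schreier_rewrite v u @ schreier_rewrite (walk v u) w"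
  by (induction u arbitrary: v) auto

lemma letter_edges_letter_inv:
  assumes "v \<in> V"
  shows "letter_edges (step v l) (letter_inv l) = word_inv (letter_edges v l)"
proof -
  have "step (step v l) (letter_inv l) = v" using assms by (rule step_letter_inv)
  then show ?thesis by (cases l) (auto simp: letter_edges_def letter_inv_def)
qed

lemma schreier_rewrite_word_inv:
  "v \<in> V \<Longrightarrow> schreier_rewrite (walk v w) (word_inv w) = word_inv (schreier_rewrite v w)"
proof (induction w arbitrary: v)
  case (Cons l w)
  then show ?case
    by (simp add: step_closed walk_word_inv letter_edges_letter_inv)
qed simp

lemma schreier_rewrite_conj:
  assumes "v \<in> V" and loop: "walk (walk v u) w = walk v u"
  shows "walk v (u @ w @ word_inv u) = v"
    and "schreier_rewrite v (u @ w @ word_inv u) =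
      schreier_rewrite v u @ schreier_rewrite (walk v u) w @ word_inv (schreier_rewrite v u)"
  using loop walk_word_inv[OF assms(1)] schreier_rewrite_word_inv[OF assms(1)] by simp_all

lemma reduce_schreier_rewrite_reduce:
  "v \<in> V \<Longrightarrow> reduce (schreier_rewrite v (reduce w)) = reduce (schreier_rewrite v w)"
  by (rule reduce_invariant[where f = "\<lambda>w. reduce (schreier_rewrite v w)"])
    (simp add: walk_closed step_closed letter_edges_letter_inv step_letter_inv)

lemma schreier_rewrite_closed:
  "v \<in> V \<Longrightarrow> x \<in> set (schreier_rewrite v w) \<Longrightarrow> fst (fst x) \<in> V"
proof (induction w arbitrary: v)
  case (Cons l w)
  have "fst (fst x) \<in> V" if "x \<in> set (letter_edges v l)"
    using that Cons.prems(1)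
    by (auto simp: letter_edges_def edge_word_def letter_inv_def step_closed split: if_splits)
  moreover from Cons.prems(2)
  have "x \<in> set (letter_edges v l) \<or> x \<in> set (schreier_rewrite (step v l) w)" by simp
  ultimately show ?case using Cons.IH[OF step_closed[OF Cons.prems(1)]] by blast
qed simp

lemma reduce_word_subst_schreier_rewrite_reduce:
  assumes "v \<in> V"
  shows "reduce (word_subst f (schreier_rewrite v (reduce w))) = reduce (word_subst f (schreier_rewrite v w))"
  by (subst (1 2) reduce_word_subst_reduce[symmetric])
    (simp only: reduce_schreier_rewrite_reduce[OF assms])

lemma schreier_rewrite_loops:
  assumes "v \<in> V" and loops: "\<And>s. s \<in> fst ` set w \<Longrightarrow> walk v s = v"
  shows "walk v (word_subst (\<lambda>s. s) w) = v \<and>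
    schreier_rewrite v (word_subst (\<lambda>s. s) w) = word_subst (schreier_rewrite v) w"
  using loops
proof (induction w)
  case (Cons l w)
  obtain s e where l: "l = (s, e)" by fastforce
  with Cons.prems have s: "walk v s = v" by simp
  then have "walk v (word_inv s) = v"
    and "schreier_rewrite v (word_inv s) = word_inv (schreier_rewrite v s)"
    using walk_word_inv[OF \<open>v \<in> V\<close>, of s] schreier_rewrite_word_inv[OF \<open>v \<in> V\<close>, of s] by simp_all
  moreover have "walk v (word_subst (\<lambda>s. s) w) = v \<and>
      schreier_rewrite v (word_subst (\<lambda>s. s) w) = word_subst (schreier_rewrite v) w"
    using Cons.IH Cons.prems by auto
  ultimately show ?case using s l by (cases e) (simp_all add: word_subst_Cons)
qed simp

definition schreier_gen :: "('v \<Rightarrow> 'g word) \<Rightarrow> 'v \<times> 'g \<Rightarrow> 'g word" where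
  "schreier_gen p e = p (fst e) @ [(snd e, False)] @ word_inv (p (step (fst e) (snd e, False)))"

context
  fixes p :: "'v \<Rightarrow> 'g word"
  assumes tree_compat: "\<And>v g. v \<in> V \<Longrightarrow> tree (v, g) \<Longrightarrow>
    reduce (p v @ [(g, False)]) = reduce (p (step v (g, False)))"
begin

lemma reduce_schreier_forward:
  assumes "v \<in> V"
  shows "reduce (p v @ [(g, False)]) =
    reduce (word_subst (schreier_gen p) (letter_edges v (g, False)) @ p (step v (g, False)))"
proof (cases "tree (v, g)")
  case True
  with assms show ?thesis by (simp add: letter_edges_def edge_word_def tree_compat)
next
  case False
  then have "reduce (word_subst (schreier_gen p) (letter_edges v (g, False)) @ p (step v (g, False))) =
      reduce ((p v @ [(g, False)]) @ word_inv (p (step v (g, False))) @ p (step v (g, False)))"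
    by (simp add: letter_edges_def edge_word_def schreier_gen_def)
  then show ?thesis by (simp only: reduce_append_word_inv_left_Nil)
qed

lemma reduce_schreier_backward:
  assumes "v \<in> V"
  shows "reduce (p v @ [(g, True)]) =
    reduce (word_subst (schreier_gen p) (letter_edges v (g, True)) @ p (step v (g, True)))"
proof -
  define u where "u = step v (g, True)"
  have u: "u \<in> V" using assms by (simp add: u_def step_closed)
  have returns: "step u (g, False) = v"
    using step_letter_inv[OF assms, of "(g, True)"] by (simp add: u_def letter_inv_def)
  show ?thesis
  proof (cases "tree (u, g)")
    case True
    have "reduce (p v @ [(g, True)]) = reduce (reduce (p u @ [(g, False)]) @ [(g, True)])"
      using tree_compat[OF u True] returns by simp
    also have "\<dots> = reduce (p u @ (g, False) # letter_inv (g, False) # [])"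
      by (simp add: letter_inv_def)
    finally show ?thesis
      using True by (simp add: letter_edges_def edge_word_def u_def)
  next
    case False
    then have "reduce (word_subst (schreier_gen p) (letter_edges v (g, True)) @ p (step v (g, True))) =
        reduce ((p v @ [(g, True)]) @ word_inv (p u) @ p u)"
      using returns by (simp add: letter_edges_def edge_word_def schreier_gen_def u_def letter_inv_def)
    then show ?thesis by (simp only: reduce_append_word_inv_left_Nil)
  qed
qed

lemma reduce_schreier_letter:
  "v \<in> V \<Longrightarrow> reduce (p v @ [l]) = reduce (word_subst (schreier_gen p) (letter_edges v l) @ p (step v l))"
  by (cases l, cases "snd l") (auto simp: reduce_schreier_forward reduce_schreier_backward)

lemma reduce_schreier_telescope:
  "v \<in> V \<Longrightarrow>
    reduce (p v @ w) = reduce (word_subst (schreier_gen p) (schreier_rewrite v w) @ p (walk v w))"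
proof (induction w arbitrary: v)
  case (Cons l w)
  let ?E = "word_subst (schreier_gen p) (letter_edges v l)"
  have "reduce (p v @ l # w) = reduce (reduce (p v @ [l]) @ w)"
    by (simp only: reduce_append_reduce_left append_assoc append_Cons append_Nil)
  also have "\<dots> = reduce (?E @ reduce (p (step v l) @ w))"
    by (simp only: reduce_schreier_letter[OF Cons.prems] reduce_append_reduce_left
        reduce_append_reduce_right append_assoc)
  also have "\<dots> = reduce (?E @ word_subst (schreier_gen p) (schreier_rewrite (step v l) w) @
      p (walk (step v l) w))"
    by (simp only: Cons.IH[OF step_closed[OF Cons.prems]] reduce_append_reduce_right)
  finally show ?case by simp
qed simp

lemma reduce_loop_schreier:
  assumes "v \<in> V" "p v = []" "walk v w = v"
  shows "reduce w = reduce (word_subst (schreier_gen p) (schreier_rewrite v w))"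
  using reduce_schreier_telescope[OF assms(1), of w] assms(2,3) by simp

end

lemma free_basis_if_retraction:
  assumes "v \<in> V" and S: "S \<subseteq> carrier (free_group UNIV)"
    and loops: "\<And>s. s \<in> S \<Longrightarrow> walk v s = v"
    and retraction: "\<And>s. s \<in> S \<Longrightarrow> reduce (word_subst \<theta> (schreier_rewrite v s)) = [(s, False)]"
  shows "free_basis (free_group UNIV) S"
  unfolding free_basis_def
proof (intro conjI allI impI notI)
  fix w assume w: "w \<noteq> [] \<and> reduced w \<and> fst ` set w \<subseteq> S"
    and trivial: "eval_word (free_group UNIV) w = \<one>\<^bsub>free_group UNIV\<^esub>"
  have "eval_word (free_group UNIV) w = reduce (word_subst (\<lambda>s. s) w)"
    using w S by (intro eval_word_free_group) blast
  with trivial have "reduce (word_subst (\<lambda>s. s) w) = []" by (simp add: free_group_def)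
  then have "[] = reduce (word_subst \<theta> (schreier_rewrite v (reduce (word_subst (\<lambda>s. s) w))))" by simp
  also have "\<dots> = reduce (word_subst \<theta> (schreier_rewrite v (word_subst (\<lambda>s. s) w)))"
    using \<open>v \<in> V\<close> by (rule reduce_word_subst_schreier_rewrite_reduce)
  also have "schreier_rewrite v (word_subst (\<lambda>s. s) w) = word_subst (schreier_rewrite v) w"
    using schreier_rewrite_loops[OF \<open>v \<in> V\<close>, of w] loops w by blast
  also have "reduce (word_subst \<theta> (word_subst (schreier_rewrite v) w)) =
      reduce (word_subst (\<lambda>s. word_subst \<theta> (schreier_rewrite v s)) w)"
    by (simp add: word_subst_word_subst)
  also have "\<dots> = reduce (word_subst (\<lambda>s. [(s, False)]) w)"
    using w retraction by (intro reduce_word_subst_cong) (auto simp: reduce_reduced)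
  also have "\<dots> = w" using w by (simp add: word_subst_letters reduce_reduced)
  finally show False using w by simp
qed (use S in simp)

lemma loop_in_generate:
  assumes tree_compat: "\<And>v g. v \<in> V \<Longrightarrow> tree (v, g) \<Longrightarrow>
      reduce (p v @ [(g, False)]) = reduce (p (step v (g, False)))"
    and "v \<in> V" "p v = []" and S: "S \<subseteq> carrier (free_group UNIV)"
    and expansion: "\<And>e. fst e \<in> V \<Longrightarrow> reduce (schreier_gen p e) = reduce (word_subst (\<lambda>s. s) (\<theta> e))"
    and expansion_in: "\<And>e. fst e \<in> V \<Longrightarrow> fst ` set (\<theta> e) \<subseteq> S"
    and w: "w \<in> carrier (free_group UNIV)" "walk v w = v"
  shows "w \<in> generate (free_group UNIV) S"
proof -
  let ?R = "schreier_rewrite v w"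
  have edges: "fst e \<in> V" if "e \<in> fst ` set ?R" for e
    using that schreier_rewrite_closed[OF \<open>v \<in> V\<close>] by auto
  have in_S: "fst ` set (word_subst \<theta> ?R) \<subseteq> S"
  proof -
    have "fst ` set (\<theta> e) \<subseteq> S" if "e \<in> fst ` set ?R" for e
      using that edges expansion_in by blast
    then show ?thesis using fst_set_word_subst[of \<theta> ?R] by blast
  qed
  have "w = reduce w" using w by (simp add: free_group_def reduce_reduced)
  also have "\<dots> = reduce (word_subst (schreier_gen p) ?R)"
    using reduce_loop_schreier[OF tree_compat \<open>v \<in> V\<close> \<open>p v = []\<close> w(2)] .
  also have "\<dots> = reduce (word_subst (\<lambda>e. word_subst (\<lambda>s. s) (\<theta> e)) ?R)"
  proof (rule reduce_word_subst_cong)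
    fix e assume "e \<in> fst ` set ?R"
    then show "reduce (schreier_gen p e) = reduce (word_subst (\<lambda>s. s) (\<theta> e))"
      using edges expansion by blast
  qed
  also have "\<dots> = eval_word (free_group UNIV) (word_subst \<theta> ?R)"
    using in_S S by (subst eval_word_free_group) (auto simp: word_subst_word_subst)
  finally have "w = eval_word (free_group UNIV) (word_subst \<theta> ?R)" .
  then show ?thesis by (rule ssubst) (rule eval_word_in_generate[OF in_S])
qed

end

section \<open>The Heisenberg group and its Cayley graph\<close>

lemma heis_carrier: "carrier (heis n) = {0..<int n} \<times> {0..<int n} \<times> {0..<int n}"
  and heis_mult: "(x, y, z) \<otimes>\<^bsub>heis n\<^esub> (x', y', z') =
    ((x + x') mod int n, (y + y' + x * z') mod int n, (z + z') mod int n)"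
  and heis_one: "\<one>\<^bsub>heis n\<^esub> = (0, 0, 0)"
  by (simp_all add: heis_def)

lemma mod_add_mult_left_eq: "((a::int) mod n + b + (c mod n) * d) mod n = (a + b + c * d) mod n"
  by (metis mod_add_cong mod_add_left_eq mod_add_right_eq mod_mult_left_eq mod_mult_right_eq mult.commute)

lemma mod_add_mult_right_eq: "((a::int) + b mod n + c * (d mod n)) mod n = (a + b + c * d) mod n"
  by (metis mod_add_cong mod_add_left_eq mod_add_right_eq mod_mult_left_eq mod_mult_right_eq mult.commute)

lemma group_heis:
  assumes "n \<ge> 1"
  shows "group (heis n)"
proof (rule groupI)
  fix u v w assume "u \<in> carrier (heis n)" "v \<in> carrier (heis n)" "w \<in> carrier (heis n)"
  obtain x y z x' y' z' x'' y'' z'' where uvw: "u = (x, y, z)" "v = (x', y', z')" "w = (x'', y'', z'')"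
    by (metis prod_cases3)
  have "((y + y' + x * z') mod int n + y'' + ((x + x') mod int n) * z'') mod int n =
      (y + (y' + y'' + x' * z'') mod int n + x * ((z' + z'') mod int n)) mod int n"
    by (simp only: mod_add_mult_left_eq mod_add_mult_right_eq) (simp add: algebra_simps)
  with uvw show "u \<otimes>\<^bsub>heis n\<^esub> v \<otimes>\<^bsub>heis n\<^esub> w = u \<otimes>\<^bsub>heis n\<^esub> (v \<otimes>\<^bsub>heis n\<^esub> w)"
    by (simp add: heis_mult mod_add_left_eq mod_add_right_eq add.assoc)
next
  fix v assume v: "v \<in> carrier (heis n)"
  obtain x y z where xyz: "v = (x, y, z)" by (metis prod_cases3)
  have "((- y + x * z) mod int n + y + (- x) mod int n * z) mod int n = 0"
    by (simp only: mod_add_mult_left_eq) (simp add: algebra_simps)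
  with v xyz assms show "\<exists>u\<in>carrier (heis n). u \<otimes>\<^bsub>heis n\<^esub> v = \<one>\<^bsub>heis n\<^esub>"
    by (intro bexI[of _ "((- x) mod int n, (- y + x * z) mod int n, (- z) mod int n)"])
      (auto simp: heis_carrier heis_mult heis_one mod_add_left_eq)
qed (use assms in \<open>auto simp: heis_carrier heis_mult heis_one\<close>)

definition heis_letter :: "nat \<Rightarrow> bool \<times> bool \<Rightarrow> int \<times> int \<times> int" where
  "heis_letter n l = (if fst l then (0, 0, if snd l then int n - 1 else 1)
     else (if snd l then int n - 1 else 1, 0, 0))"

definition heis_step :: "nat \<Rightarrow> int \<times> int \<times> int \<Rightarrow> bool \<times> bool \<Rightarrow> int \<times> int \<times> int" where
  "heis_step n v l = v \<otimes>\<^bsub>heis n\<^esub> heis_letter n l"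

lemma heis_step_a: "heis_step n (x, y, z) (False, False) = ((x + 1) mod int n, y mod int n, z mod int n)"
  and heis_step_a_inv: "heis_step n (x, y, z) (False, True) = ((x - 1) mod int n, y mod int n, z mod int n)"
  and heis_step_b: "heis_step n (x, y, z) (True, False) = (x mod int n, (y + x) mod int n, (z + 1) mod int n)"
  and heis_step_b_inv: "heis_step n (x, y, z) (True, True) = (x mod int n, (y - x) mod int n, (z - 1) mod int n)"
proof -
  have "(c + (int n - 1)) mod int n = (c - 1) mod int n" for c :: int
    by (metis add.commute add_diff_eq diff_add_cancel mod_add_self2)
  moreover have "y + x * (int n - 1) = (y - x) + x * int n" by (simp add: algebra_simps)
  then have "(y + x * (int n - 1)) mod int n = (y - x) mod int n" by (metis mod_mult_self1)
  ultimately show "heis_step n (x, y, z) (False, False) = ((x + 1) mod int n, y mod int n, z mod int n)"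
    "heis_step n (x, y, z) (False, True) = ((x - 1) mod int n, y mod int n, z mod int n)"
    "heis_step n (x, y, z) (True, False) = (x mod int n, (y + x) mod int n, (z + 1) mod int n)"
    "heis_step n (x, y, z) (True, True) = (x mod int n, (y - x) mod int n, (z - 1) mod int n)"
    by (simp_all add: heis_step_def heis_letter_def heis_mult)
qed

lemma heis_step_closed: "v \<in> carrier (heis n) \<Longrightarrow> heis_step n v l \<in> carrier (heis n)"
  by (cases v) (auto simp: heis_step_def heis_letter_def heis_mult heis_carrier)

lemma heis_step_letter_inv:
  assumes "v \<in> carrier (heis n)"
  shows "heis_step n (heis_step n v l) (letter_inv l) = v"
proof -
  obtain x y z where v: "v = (x, y, z)" by (metis prod_cases3)
  obtain g e where "l = (g, e)" by fastforce
  with v assms show ?thesis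
    by (cases g; cases e) (auto simp: heis_carrier letter_inv_def heis_step_a heis_step_a_inv
        heis_step_b heis_step_b_inv mod_simps)
qed

text \<open>A spanning tree of the Cayley graph of \<open>H\<^sub>n\<close> with respect to \<open>\<alpha>\<close> (label \<open>False\<close>) and
  \<open>\<beta>\<close> (label \<open>True\<close>): all \<open>\<beta>\<close>-edges except those leaving the layer \<open>z = n - 1\<close>, the
  \<open>\<alpha>\<close>-edges of the layer \<open>z = 0\<close> except those leaving \<open>x = n - 1\<close>, and the \<open>\<alpha>\<close>-edges
  from \<open>(0, y, 1)\<close> with \<open>y \<noteq> 0\<close>, along which the powers of the commutator run.\<close>

fun heis_tree :: "nat \<Rightarrow> (int \<times> int \<times> int) \<times> bool \<Rightarrow> bool" where
  "heis_tree n ((x, y, z), False) \<longleftrightarrow> z = 0 \<and> x \<le> int n - 2 \<or> x = 0 \<and> z = 1 \<and> y \<noteq> 0"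
| "heis_tree n ((x, y, z), True) \<longleftrightarrow> z \<le> int n - 2"

interpretation heis: schreier_graph "carrier (heis n)" "heis_step n" "heis_tree n" for n
  by unfold_locales (simp_all add: heis_step_closed heis_step_letter_inv)

lemma heis_walk_mult:
  assumes "n \<ge> 2" and "v \<in> carrier (heis n)"
  shows "heis.walk n v w = v \<otimes>\<^bsub>heis n\<^esub> heis.walk n (0, 0, 0) w"
proof -
  interpret H: group "heis n" using assms(1) group_heis by simp
  have letter: "heis_letter n l \<in> carrier (heis n)" for l
    using assms(1) by (auto simp: heis_letter_def heis_carrier)
  show ?thesis
    using assms(2)
  proof (induction w arbitrary: v)
    case (Cons l w)
    have "heis.walk n v (l # w) = heis_step n v l \<otimes>\<^bsub>heis n\<^esub> heis.walk n (0, 0, 0) w"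
      using Cons.IH[OF heis_step_closed[OF Cons.prems]] by simp
    also have "\<dots> = (v \<otimes>\<^bsub>heis n\<^esub> heis_letter n l) \<otimes>\<^bsub>heis n\<^esub> heis.walk n (0, 0, 0) w"
      by (simp only: heis_step_def)
    also have "\<dots> = v \<otimes>\<^bsub>heis n\<^esub> heis.walk n (heis_letter n l) w"
      using Cons.IH[OF letter] Cons.prems letter heis.walk_closed[of "(0, 0, 0)" n w] assms(1)
      by (simp add: H.m_assoc heis_carrier)
    also have "heis_letter n l = heis_step n (0, 0, 0) l"
      using H.l_one[OF letter] by (simp add: heis_step_def heis_one)
    finally show ?case by simp
  qed (metis H.r_one heis_one heis.walk_Nil)
qed

lemma hom_gen_letter:
  assumes "n \<ge> 2" and h: "h \<in> hom F2 (heis n)"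
    and "h gen_a = heis_alpha" and "h gen_b = heis_beta"
  shows "h [l] = heis_letter n l"
proof -
  interpret H: group "heis n" using assms(1) group_heis by simp
  interpret group_hom F2 "heis n" h
    using h by (simp add: group_hom_def group_hom_axioms_def F2.group_axioms H.group_axioms)
  have gens: "gen_a \<in> carrier F2" "gen_b \<in> carrier F2" by (simp_all add: F2_carrier gen_a_def gen_b_def)
  have "inv\<^bsub>F2\<^esub> gen_a = [(False, True)]" "inv\<^bsub>F2\<^esub> gen_b = [(True, True)]"
    using F2_inv_reduce[of gen_a] F2_inv_reduce[of gen_b] gens
    by (simp_all add: gen_a_def gen_b_def letter_inv_def reduce_Cons)
  moreover have "inv\<^bsub>heis n\<^esub> heis_alpha = (int n - 1, 0, 0)" "inv\<^bsub>heis n\<^esub> heis_beta = (0, 0, int n - 1)"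
    using assms(1) by (auto intro!: H.inv_equality simp: heis_alpha_def heis_beta_def heis_mult heis_one heis_carrier)
  ultimately show ?thesis
    using assms(3,4) hom_inv[OF gens(1)] hom_inv[OF gens(2)]
    by (cases l rule: prod.exhaust[case_product bool.exhaust bool.exhaust])
      (auto simp: heis_letter_def gen_a_def gen_b_def heis_alpha_def heis_beta_def)
qed

lemma hom_eq_heis_walk:
  assumes "n \<ge> 2" and h: "h \<in> hom F2 (heis n)"
    and "h gen_a = heis_alpha" and "h gen_b = heis_beta"
    and "w \<in> carrier F2"
  shows "h w = heis.walk n (0, 0, 0) w"
  using assms(5)
proof (induction w)
  case Nil
  interpret group_hom F2 "heis n" h
    using h assms(1) group_heis[of n] by (simp add: group_hom_def group_hom_axioms_def F2.group_axioms)
  show ?case using hom_one by (simp add: F2_one heis_one)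
next
  case (Cons l w)
  then have w: "w \<in> carrier F2" by (simp add: F2_carrier reduced_ConsD)
  have "l # w = [l] \<otimes>\<^bsub>F2\<^esub> w"
    using Cons.prems w by (simp add: F2_carrier F2_mult reduce_reduced)
  then have "h (l # w) = heis_letter n l \<otimes>\<^bsub>heis n\<^esub> heis.walk n (0, 0, 0) w"
    using h w Cons.IH hom_gen_letter[OF assms(1-4)] by (simp add: hom_mult F2_carrier)
  also have "\<dots> = heis.walk n (heis_letter n l) w"
    using heis_walk_mult[of n "heis_letter n l" w] assms(1)
    by (auto simp: heis_letter_def heis_carrier)
  also have "heis_letter n l = heis_step n (0, 0, 0) l"
    using assms(1) by (auto simp: heis_step_def heis_letter_def heis_mult)
  finally show ?case by simp
qed

definition word_T :: "bool word" where
  "word_T = [(False, False), (True, False), (False, True), (True, True)]"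

lemma commutator_gen_a_gen_b: "commutator F2 gen_a gen_b = reduce word_T"
proof -
  have "reduce gen_a = gen_a" "reduce gen_b = gen_b" by (simp_all add: gen_a_def gen_b_def reduce_Cons)
  then have "commutator F2 gen_a gen_b = commutator F2 (reduce gen_a) (reduce gen_b)" by simp
  also have "\<dots> = reduce word_T"
    by (simp add: commutator_def word_T_def gen_a_def gen_b_def letter_inv_def)
  finally show ?thesis .
qed

lemma word_pow_nat_add_one: "0 \<le> x \<Longrightarrow> word_pow u (nat (x + 1)) = word_pow u (nat x) @ u"
  by (simp add: nat_add_distrib word_pow_Suc' flip: Suc_eq_plus1)

text \<open>The word \<open>T\<^sup>k a\<^sup>x b\<^sup>z\<close> leads from the origin to \<open>(x, k + x z, z)\<close>.\<close>

definition heis_transversal :: "nat \<Rightarrow> int \<times> int \<times> int \<Rightarrow> bool word" where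
  "heis_transversal n v = (case v of (x, y, z) \<Rightarrow>
     word_pow word_T (nat ((y - x * z) mod int n)) @ word_pow gen_a (nat x) @ word_pow gen_b (nat z))"

lemma heis_transversal_origin [simp]: "heis_transversal n (0, 0, 0) = []"
  by (simp add: heis_transversal_def)

lemma heis_transversal_commutator_edge:
  assumes "0 < y" "y < int n"
  shows "reduce (heis_transversal n (0, y, 1) @ [(False, False)]) = reduce (heis_transversal n (1, y, 1))"
proof -
  \<comment> \<open>\<open>T\<^sup>y b a = T\<^sup>y\<^sup>-\<^sup>1 a b a\<inverse> b\<inverse> b a\<close> reduces to \<open>T\<^sup>y\<^sup>-\<^sup>1 a b\<close>\<close>
  let ?P = "word_pow word_T (nat (y - 1))"
  have "word_pow word_T (nat y) = ?P @ word_T"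
    using word_pow_nat_add_one[of "y - 1" word_T] assms by simp
  then have "heis_transversal n (0, y, 1) @ [(False, False)] = ?P @ word_T @ [(True, False), (False, False)]"
    using assms by (simp add: heis_transversal_def gen_a_def gen_b_def word_pow_Suc)
  then have "reduce (heis_transversal n (0, y, 1) @ [(False, False)]) =
      reduce ((?P @ [(False, False), (True, False), (False, True)]) @
        (True, True) # letter_inv (True, True) # [(False, False)])"
    by (simp add: word_T_def letter_inv_def)
  also have "\<dots> = reduce ((?P @ [(False, False), (True, False), (False, True)]) @ [(False, False)])"
    by (rule reduce_cancel)
  also have "\<dots> = reduce ((?P @ [(False, False), (True, False)]) @ (False, True) # letter_inv (False, True) # [])"
    by (simp add: letter_inv_def)
  also have "\<dots> = reduce ((?P @ [(False, False), (True, False)]) @ [])"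
    by (rule reduce_cancel)
  also have "\<dots> = reduce (heis_transversal n (1, y, 1))"
    using assms by (simp add: heis_transversal_def gen_a_def gen_b_def word_pow_Suc)
  finally show ?thesis .
qed

lemma heis_transversal_tree:
  assumes "n \<ge> 2" and v: "v \<in> carrier (heis n)" and tree: "heis_tree n (v, g)"
  shows "reduce (heis_transversal n v @ [(g, False)]) = reduce (heis_transversal n (heis_step n v (g, False)))"
proof -
  obtain x y z where xyz: "v = (x, y, z)" by (metis prod_cases3)
  have b: "0 \<le> x" "x < int n" "0 \<le> y" "y < int n" "0 \<le> z" "z < int n"
    using v xyz by (auto simp: heis_carrier)
  show ?thesis
  proof (cases g)
    case True
    with tree xyz have "z \<le> int n - 2" by simp
    with True xyz b have "heis_step n v (g, False) = (x, (y + x) mod int n, z + 1)"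
      by (simp add: heis_step_b)
    moreover have "((y + x) mod int n - x * (z + 1)) mod int n = (y - x * z) mod int n"
      by (simp add: mod_simps algebra_simps)
    ultimately show ?thesis
      using b True xyz by (simp add: heis_transversal_def word_pow_nat_add_one gen_b_def)
  next
    case False
    with tree xyz consider "z = 0" "x \<le> int n - 2" | "x = 0" "z = 1" "y \<noteq> 0" by auto
    then show ?thesis
    proof cases
      case 1
      then have "heis_step n v (g, False) = (x + 1, y, 0)" using False xyz b by (simp add: heis_step_a)
      then show ?thesis using 1 b False xyz by (simp add: heis_transversal_def word_pow_nat_add_one gen_a_def)
    next
      case 2
      then have "heis_step n v (g, False) = (1, y, 1)" using False xyz b assms(1) by (simp add: heis_step_a)
      with 2 b False xyz show ?thesis using heis_transversal_commutator_edge[of y n] by simp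
    qed
  qed
qed

definition word_ab :: "nat \<Rightarrow> nat \<Rightarrow> bool word" where
  "word_ab i j = word_pow gen_a i @ word_pow gen_b j"

context
  fixes n :: nat
  assumes n2: "n \<ge> 2"
begin

lemma origin_in_heis [simp]: "(0, 0, 0) \<in> carrier (heis n)"
  using n2 by (simp add: heis_carrier)

lemma heis_edge_word_b: "heis.edge_word n ((x, y, z), True) =
    (if z \<le> int n - 2 then [] else [(((x, y, z), True), False)])"
  by (simp add: heis.edge_word_def)

lemma heis_walk_T:
  assumes "0 \<le> y" "y < int n"
  shows "heis.walk n (0, y, 0) word_T = (0, (y + 1) mod int n, 0)"
    and "heis.schreier_rewrite n (0, y, 0) word_T =
      (if y = int n - 1 then [(((0, 0, 1), False), True)] else [])"
proof -
  have "1 mod int n = 1" "y mod int n = y" using n2 assms by simp_all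
  moreover have "(y + 1) mod int n = (if y = int n - 1 then 0 else y + 1)" using assms by auto
  ultimately show "heis.walk n (0, y, 0) word_T = (0, (y + 1) mod int n, 0)"
    "heis.schreier_rewrite n (0, y, 0) word_T =
      (if y = int n - 1 then [(((0, 0, 1), False), True)] else [])"
    using n2 assms by (simp_all add: word_T_def heis_step_a heis_step_b heis_step_a_inv heis_step_b_inv
        heis.letter_edges_def heis.edge_word_def letter_inv_def mod_simps)
qed

lemma heis_walk_T_pow:
  assumes "k \<le> n - 1"
  shows "heis.walk n (0, 0, 0) (word_pow word_T k) = (0, int k, 0) \<and>
    heis.schreier_rewrite n (0, 0, 0) (word_pow word_T k) = []"
  using assms
proof (induction k)
  case (Suc k)
  then have "int k < int n - 1" "(int k + 1) mod int n = int (Suc k)" by auto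
  with Suc heis_walk_T[of "int k"] show ?case by (simp add: word_pow_Suc')
qed simp

lemma heis_walk_a_pow:
  assumes "i \<le> n" "0 \<le> y" "y < int n" "0 \<le> z" "z < int n"
  shows "heis.walk n (0, y, z) (word_pow gen_a i) = (int i mod int n, y, z) \<and>
    heis.schreier_rewrite n (0, y, z) (word_pow gen_a i) =
      concat (map (\<lambda>t. heis.edge_word n ((int t, y, z), False)) [0..<i])"
  using assms(1)
proof (induction i)
  case (Suc i)
  then have "int i mod int n = int i" by simp
  with Suc assms(2-5) show ?case
    by (auto simp: word_pow_Suc' gen_a_def heis_step_a heis.letter_edges_def add.commute)
qed simp

lemma heis_walk_b_pow:
  assumes "j \<le> n" "0 \<le> x" "x < int n" "0 \<le> y" "y < int n"
  shows "heis.walk n (x, y, 0) (word_pow gen_b j) = (x, (y + x * int j) mod int n, int j mod int n) \<and>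
    heis.schreier_rewrite n (x, y, 0) (word_pow gen_b j) =
      (if j = n then [(((x, (y + x * (int n - 1)) mod int n, int n - 1), True), False)] else [])"
  using assms(1)
proof (induction j)
  case (Suc j)
  then have j: "j < n" "int j mod int n = int j" by auto
  have "((y + x * int j) mod int n + x) mod int n = (y + x * int (Suc j)) mod int n"
    by (simp add: mod_simps algebra_simps)
  moreover have "int n - 1 = int j" if "Suc j = n" using that by simp
  ultimately show ?case
    using Suc.IH j assms(2-5)
    by (auto simp: word_pow_Suc' gen_b_def heis_step_b heis.letter_edges_def heis.edge_word_def
        add.commute[of 1])
qed (use assms in simp)

lemma heis_walk_T_inner:
  assumes "0 \<le> i" "i \<le> int n - 2" "0 \<le> j" "j \<le> int n - 2" "0 \<le> y" "y < int n"
  shows "heis.walk n (i, y, j) word_T = (i, (y + 1) mod int n, j)"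
    and "heis.schreier_rewrite n (i, y, j) word_T = heis.edge_word n ((i, y, j), False) @
      word_inv (heis.edge_word n ((i, (y + i + 1) mod int n, j + 1), False))"
proof -
  have "i mod int n = i" "j mod int n = j" "y mod int n = y"
    "(i + 1) mod int n = i + 1" "(j + 1) mod int n = j + 1"
    using assms by auto
  moreover have "((y + (i + 1)) mod int n - i) mod int n = (y + 1) mod int n"
    by (simp add: mod_simps algebra_simps)
  ultimately show "heis.walk n (i, y, j) word_T = (i, (y + 1) mod int n, j)"
    "heis.schreier_rewrite n (i, y, j) word_T = heis.edge_word n ((i, y, j), False) @
      word_inv (heis.edge_word n ((i, (y + i + 1) mod int n, j + 1), False))"
    using assms by (simp_all add: word_T_def heis_step_a heis_step_b heis_step_a_inv heis_step_b_inv
        heis.letter_edges_def heis_edge_word_b add.assoc)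
qed

lemma heis_walk_word_ab:
  assumes "i \<le> n - 1" "j \<le> n - 1" "0 \<le> y" "y < int n"
  shows "heis.walk n (0, y, 0) (word_ab i j) = (int i, (y + int i * int j) mod int n, int j) \<and>
    heis.schreier_rewrite n (0, y, 0) (word_ab i j) = []"
proof -
  have "heis.walk n (0, y, 0) (word_pow gen_a i) = (int i, y, 0)"
    "heis.schreier_rewrite n (0, y, 0) (word_pow gen_a i) = []"
    using heis_walk_a_pow[of i y 0] assms n2 by (auto simp: heis.edge_word_def)
  moreover have "heis.walk n (int i, y, 0) (word_pow gen_b j) = (int i, (y + int i * int j) mod int n, int j)"
    "heis.schreier_rewrite n (int i, y, 0) (word_pow gen_b j) = []"
    using heis_walk_b_pow[of j "int i" y] assms n2 by auto
  ultimately show ?thesis by (simp add: word_ab_def)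
qed

end

definition word_A1 :: "nat \<Rightarrow> nat \<Rightarrow> nat \<Rightarrow> bool word" where
  "word_A1 n i k = word_pow word_T k @ word_pow gen_b i @ word_pow gen_a n @
     word_inv (word_pow gen_b i) @ word_inv (word_pow word_T k)"

definition word_A2 :: "nat \<Rightarrow> nat \<Rightarrow> nat \<Rightarrow> bool word" where
  "word_A2 n i k = word_pow word_T k @ word_pow gen_a i @ word_pow gen_b n @
     word_inv (word_pow gen_a i) @ word_inv (word_pow word_T k)"

text \<open>The elements of \<open>A\<^sub>3\<close> are \<open>word_A34 (n - 1) i j 0\<close> and those of \<open>A\<^sub>4\<close> are
  \<open>word_A34 k i j (k + 1)\<close>; in both cases \<open>m = (k + 1) mod n\<close>.\<close>

definition word_A34 :: "nat \<Rightarrow> nat \<Rightarrow> nat \<Rightarrow> nat \<Rightarrow> bool word" where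
  "word_A34 k i j m = word_pow word_T k @ word_ab i j @ word_T @ word_inv (word_ab i j) @
     word_inv (word_pow word_T m)"

lemma F2_pow_gen_a: "gen_a [^]\<^bsub>F2\<^esub> k = reduce (word_pow gen_a k)"
  and F2_pow_gen_b: "gen_b [^]\<^bsub>F2\<^esub> k = reduce (word_pow gen_b k)"
  and F2_pow_T: "commutator F2 gen_a gen_b [^]\<^bsub>F2\<^esub> k = reduce (word_pow word_T k)"
proof -
  have "reduce gen_a = gen_a" "reduce gen_b = gen_b" by (simp_all add: gen_a_def gen_b_def reduce_Cons)
  then show "gen_a [^]\<^bsub>F2\<^esub> k = reduce (word_pow gen_a k)" "gen_b [^]\<^bsub>F2\<^esub> k = reduce (word_pow gen_b k)"
    by (metis F2_pow_reduce)+
  show "commutator F2 gen_a gen_b [^]\<^bsub>F2\<^esub> k = reduce (word_pow word_T k)"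
    by (simp add: commutator_gen_a_gen_b)
qed

lemma reduce_word_A1: "commutator F2 gen_a gen_b [^]\<^bsub>F2\<^esub> k \<otimes>\<^bsub>F2\<^esub>
    conjugate F2 (gen_a [^]\<^bsub>F2\<^esub> n) (gen_b [^]\<^bsub>F2\<^esub> i) \<otimes>\<^bsub>F2\<^esub>
    inv\<^bsub>F2\<^esub> (commutator F2 gen_a gen_b [^]\<^bsub>F2\<^esub> k) = reduce (word_A1 n i k)"
  by (simp add: F2_pow_gen_a F2_pow_gen_b F2_pow_T conjugate_def word_A1_def)

lemma reduce_word_A2: "commutator F2 gen_a gen_b [^]\<^bsub>F2\<^esub> k \<otimes>\<^bsub>F2\<^esub>
    conjugate F2 (gen_b [^]\<^bsub>F2\<^esub> n) (gen_a [^]\<^bsub>F2\<^esub> i) \<otimes>\<^bsub>F2\<^esub>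
    inv\<^bsub>F2\<^esub> (commutator F2 gen_a gen_b [^]\<^bsub>F2\<^esub> k) = reduce (word_A2 n i k)"
  by (simp add: F2_pow_gen_a F2_pow_gen_b F2_pow_T conjugate_def word_A2_def)

lemma reduce_word_A3: "commutator F2 gen_a gen_b [^]\<^bsub>F2\<^esub> k \<otimes>\<^bsub>F2\<^esub>
    conjugate F2 (commutator F2 gen_a gen_b) (gen_a [^]\<^bsub>F2\<^esub> i \<otimes>\<^bsub>F2\<^esub> gen_b [^]\<^bsub>F2\<^esub> j) =
    reduce (word_A34 k i j 0)"
  by (simp add: F2_pow_gen_a F2_pow_gen_b F2_pow_T commutator_gen_a_gen_b conjugate_def word_A34_def word_ab_def)

lemma reduce_word_A4: "commutator F2 gen_a gen_b [^]\<^bsub>F2\<^esub> k \<otimes>\<^bsub>F2\<^esub>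
    conjugate F2 (commutator F2 gen_a gen_b) (gen_a [^]\<^bsub>F2\<^esub> i \<otimes>\<^bsub>F2\<^esub> gen_b [^]\<^bsub>F2\<^esub> j) \<otimes>\<^bsub>F2\<^esub>
    inv\<^bsub>F2\<^esub> (commutator F2 gen_a gen_b [^]\<^bsub>F2\<^esub> m) = reduce (word_A34 k i j m)"
  by (simp add: F2_pow_gen_a F2_pow_gen_b F2_pow_T commutator_gen_a_gen_b conjugate_def word_A34_def word_ab_def)

context
  fixes n :: nat
  assumes n2: "n \<ge> 2"
begin

lemma heis_walk_word_A1:
  assumes "i \<le> n - 1" "k \<le> n - 1"
  shows "heis.walk n (0, 0, 0) (word_A1 n i k) = (0, 0, 0)"
    and "heis.schreier_rewrite n (0, 0, 0) (word_A1 n i k) =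
      concat (map (\<lambda>t. heis.edge_word n ((int t, int k, int i), False)) [0..<n])"
proof -
  let ?u = "word_pow word_T k @ word_pow gen_b i"
  have u: "heis.walk n (0, 0, 0) ?u = (0, int k, int i)" "heis.schreier_rewrite n (0, 0, 0) ?u = []"
    using heis_walk_T_pow[OF n2 assms(2)] heis_walk_b_pow[OF n2, of i 0 "int k"] assms n2 by auto
  have a: "heis.walk n (0, int k, int i) (word_pow gen_a n) = (0, int k, int i)"
    "heis.schreier_rewrite n (0, int k, int i) (word_pow gen_a n) =
      concat (map (\<lambda>t. heis.edge_word n ((int t, int k, int i), False)) [0..<n])"
    using heis_walk_a_pow[OF n2, of n "int k" "int i"] assms n2 by auto
  have "word_A1 n i k = ?u @ word_pow gen_a n @ word_inv ?u" by (simp add: word_A1_def)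
  then show "heis.walk n (0, 0, 0) (word_A1 n i k) = (0, 0, 0)"
    "heis.schreier_rewrite n (0, 0, 0) (word_A1 n i k) =
      concat (map (\<lambda>t. heis.edge_word n ((int t, int k, int i), False)) [0..<n])"
    using heis.schreier_rewrite_conj[of "(0, 0, 0)" n ?u "word_pow gen_a n"] u a n2 by simp_all
qed

lemma heis_walk_word_A2:
  assumes "i \<le> n - 1" "k \<le> n - 1"
  shows "heis.walk n (0, 0, 0) (word_A2 n i k) = (0, 0, 0)"
    and "heis.schreier_rewrite n (0, 0, 0) (word_A2 n i k) =
      [(((int i, (int k + int i * (int n - 1)) mod int n, int n - 1), True), False)]"
proof -
  let ?u = "word_pow word_T k @ word_pow gen_a i"
  have u: "heis.walk n (0, 0, 0) ?u = (int i, int k, 0)" "heis.schreier_rewrite n (0, 0, 0) ?u = []"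
    using heis_walk_T_pow[OF n2 assms(2)] heis_walk_a_pow[OF n2, of i "int k" 0] assms n2
    by (auto simp: heis.edge_word_def)
  have "(int k + int i * int n) mod int n = int k" using assms n2 by simp
  then have b: "heis.walk n (int i, int k, 0) (word_pow gen_b n) = (int i, int k, 0)"
    "heis.schreier_rewrite n (int i, int k, 0) (word_pow gen_b n) =
      [(((int i, (int k + int i * (int n - 1)) mod int n, int n - 1), True), False)]"
    using heis_walk_b_pow[OF n2, of n "int i" "int k"] assms n2 by auto
  have "word_A2 n i k = ?u @ word_pow gen_b n @ word_inv ?u" by (simp add: word_A2_def)
  then show "heis.walk n (0, 0, 0) (word_A2 n i k) = (0, 0, 0)"
    "heis.schreier_rewrite n (0, 0, 0) (word_A2 n i k) =
      [(((int i, (int k + int i * (int n - 1)) mod int n, int n - 1), True), False)]"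
    using heis.schreier_rewrite_conj[of "(0, 0, 0)" n ?u "word_pow gen_b n"] u b n2 by simp_all
qed

lemma heis_walk_word_A34:
  assumes "k \<le> n - 1" "i \<le> n - 2" "j \<le> n - 2" "m = Suc k mod n"
  defines "y \<equiv> (int k + int i * int j) mod int n"
  shows "heis.walk n (0, 0, 0) (word_A34 k i j m) = (0, 0, 0)"
    and "heis.schreier_rewrite n (0, 0, 0) (word_A34 k i j m) = heis.edge_word n ((int i, y, int j), False) @
      word_inv (heis.edge_word n ((int i, (y + int i + 1) mod int n, int j + 1), False))"
proof -
  have "m < n" using assms(4) n2 by simp
  then have m: "m \<le> n - 1" "int m = (int k + 1) mod int n" using assms(4) by (auto simp: zmod_int add.commute)
  have T: "heis.walk n (0, 0, 0) (word_pow word_T k) = (0, int k, 0)"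
    "heis.schreier_rewrite n (0, 0, 0) (word_pow word_T k) = []"
    using heis_walk_T_pow[OF n2 assms(1)] by auto
  have Tm: "heis.walk n (0, 0, 0) (word_pow word_T m) = (0, int m, 0)"
    "heis.schreier_rewrite n (0, 0, 0) (word_pow word_T m) = []"
    using heis_walk_T_pow[OF n2 m(1)] by auto
  have ab: "heis.walk n (0, int k, 0) (word_ab i j) = (int i, y, int j)"
    "heis.schreier_rewrite n (0, int k, 0) (word_ab i j) = []"
    using heis_walk_word_ab[OF n2, of i j "int k"] assms n2 by auto
  have "(y + 1) mod int n = (int m + int i * int j) mod int n"
    unfolding y_def m(2) by (simp add: mod_simps algebra_simps)
  then have ab': "heis.walk n (0, int m, 0) (word_ab i j) = (int i, (y + 1) mod int n, int j)"
    "heis.schreier_rewrite n (0, int m, 0) (word_ab i j) = []"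
    using heis_walk_word_ab[OF n2, of i j "int m"] assms m n2 by auto
  have sq: "heis.walk n (int i, y, int j) word_T = (int i, (y + 1) mod int n, int j)"
    "heis.schreier_rewrite n (int i, y, int j) word_T = heis.edge_word n ((int i, y, int j), False) @
      word_inv (heis.edge_word n ((int i, (y + int i + 1) mod int n, int j + 1), False))"
    using heis_walk_T_inner[OF n2, of "int i" "int j" y] assms n2 by (auto simp: y_def)
  have V: "(0, int m, 0) \<in> carrier (heis n)" using m n2 by (auto simp: heis_carrier)
  have back_ab: "heis.walk n (int i, (y + 1) mod int n, int j) (word_inv (word_ab i j)) = (0, int m, 0)"
    "heis.schreier_rewrite n (int i, (y + 1) mod int n, int j) (word_inv (word_ab i j)) = []"
    using heis.walk_word_inv[OF V, of "word_ab i j"] heis.schreier_rewrite_word_inv[OF V, of "word_ab i j"] ab'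
    by simp_all
  have back_T: "heis.walk n (0, int m, 0) (word_inv (word_pow word_T m)) = (0, 0, 0)"
    "heis.schreier_rewrite n (0, int m, 0) (word_inv (word_pow word_T m)) = []"
    using heis.walk_word_inv[OF origin_in_heis[OF n2], of "word_pow word_T m"]
      heis.schreier_rewrite_word_inv[OF origin_in_heis[OF n2], of "word_pow word_T m"] Tm
    by simp_all
  show "heis.walk n (0, 0, 0) (word_A34 k i j m) = (0, 0, 0)"
    "heis.schreier_rewrite n (0, 0, 0) (word_A34 k i j m) = heis.edge_word n ((int i, y, int j), False) @
      word_inv (heis.edge_word n ((int i, (y + int i + 1) mod int n, int j + 1), False))"
    using T ab sq back_ab back_T by (simp_all add: word_A34_def)
qed

end

abbreviation heis_schreier_gen :: "nat \<Rightarrow> (int \<times> int \<times> int) \<times> bool \<Rightarrow> bool word" where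
  "heis_schreier_gen n \<equiv> heis.schreier_gen n (heis_transversal n)"

definition basis_A34 :: "nat \<Rightarrow> nat \<Rightarrow> nat \<Rightarrow> nat \<Rightarrow> bool word" where
  "basis_A34 n k i j = reduce (word_A34 k i j (Suc k mod n))"

context
  fixes n :: nat
  assumes n2: "n \<ge> 2"
begin

lemma reduce_loop_heis:
  assumes "heis.walk n (0, 0, 0) w = (0, 0, 0)"
  shows "reduce w = reduce (word_subst (heis_schreier_gen n) (heis.schreier_rewrite n (0, 0, 0) w))"
proof (rule heis.reduce_loop_schreier[where p = "heis_transversal n"])
  show "reduce (heis_transversal n v @ [(g, False)]) = reduce (heis_transversal n (heis_step n v (g, False)))"
    if "v \<in> carrier (heis n)" "heis_tree n (v, g)" for v g
    using heis_transversal_tree[OF n2 that] .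
qed (use assms n2 in simp_all)

lemma heis_schreier_gen_tree:
  assumes "v \<in> carrier (heis n)" "heis_tree n (v, g)"
  shows "reduce (heis_schreier_gen n (v, g)) = []"
proof -
  let ?u = "heis_step n v (g, False)"
  have "reduce (heis_schreier_gen n (v, g)) =
      reduce (reduce (heis_transversal n v @ [(g, False)]) @ word_inv (heis_transversal n ?u))"
    by (simp add: heis.schreier_gen_def)
  also have "\<dots> = []" by (simp add: heis_transversal_tree[OF n2 assms])
  finally show ?thesis .
qed

lemma reduce_word_subst_heis_edge_word:
  "v \<in> carrier (heis n) \<Longrightarrow>
    reduce (word_subst (heis_schreier_gen n) (heis.edge_word n (v, g))) = reduce (heis_schreier_gen n (v, g))"
  using heis_schreier_gen_tree by (simp add: heis.edge_word_def)

lemma reduce_word_A1_schreier: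
  assumes "i \<le> n - 1" "k \<le> n - 1"
  shows "reduce (word_A1 n i k) =
    reduce (concat (map (\<lambda>t. heis_schreier_gen n ((int t, int k, int i), False)) [0..<n]))"
proof -
  have "reduce (word_A1 n i k) = reduce (concat (map (\<lambda>t.
      word_subst (heis_schreier_gen n) (heis.edge_word n ((int t, int k, int i), False))) [0..<n]))"
    using reduce_loop_heis heis_walk_word_A1[OF n2 assms] by (simp add: word_subst_concat_map)
  also have "\<dots> = reduce (concat (map (\<lambda>t. heis_schreier_gen n ((int t, int k, int i), False)) [0..<n]))"
    using assms by (intro reduce_concat_map_cong reduce_word_subst_heis_edge_word) (auto simp: heis_carrier)
  finally show ?thesis .
qed

lemma reduce_basis_A34_schreier:
  assumes "k \<le> n - 1" "i \<le> n - 2" "j \<le> n - 2"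
  defines "y \<equiv> (int k + int i * int j) mod int n"
  shows "reduce (basis_A34 n k i j) = reduce (heis_schreier_gen n ((int i, y, int j), False) @
    word_inv (heis_schreier_gen n ((int i, (y + int i + 1) mod int n, int j + 1), False)))"
proof -
  have V: "(int i, y, int j) \<in> carrier (heis n)" "(int i, (y + int i + 1) mod int n, int j + 1) \<in> carrier (heis n)"
    using assms n2 by (auto simp: heis_carrier y_def)
  have "reduce (basis_A34 n k i j) = reduce (word_subst (heis_schreier_gen n)
      (heis.edge_word n ((int i, y, int j), False)) @
      word_inv (word_subst (heis_schreier_gen n) (heis.edge_word n ((int i, (y + int i + 1) mod int n, int j + 1), False))))"
    using reduce_loop_heis heis_walk_word_A34[OF n2 assms(1-3) refl]
    by (simp add: basis_A34_def y_def word_subst_word_inv)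
  also have "\<dots> = reduce (heis_schreier_gen n ((int i, y, int j), False) @
    word_inv (heis_schreier_gen n ((int i, (y + int i + 1) mod int n, int j + 1), False)))"
    using V by (intro reduce_append_cong reduce_word_inv_cong reduce_word_subst_heis_edge_word)
  finally show ?thesis .
qed

end

section \<open>Expanding Schreier generators in the basis\<close>

text \<open>A non-tree \<open>\<beta>\<close>-edge gives an
  element of \<open>A\<^sub>2\<close>. For \<open>x \<le> n - 2\<close>, the basis element of \<open>A\<^sub>3 \<union> A\<^sub>4\<close> read off the square at
  \<open>(x, y - x - 1, z)\<close> relates the \<open>\<alpha>\<close>-edge at \<open>(x, y, z + 1)\<close> to the one at \<open>(x, y - x - 1, z)\<close>,
  and the recursion ends in the tree at \<open>z = 0\<close>. The \<open>\<alpha>\<close>-edges with \<open>x = n - 1\<close> close the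
  \<open>\<alpha>\<close>-cycles, whose products are the elements of \<open>A\<^sub>1\<close>.\<close>

fun a_edge_expansion :: "nat \<Rightarrow> int \<Rightarrow> int \<Rightarrow> nat \<Rightarrow> (bool word \<times> bool) list" where
  "a_edge_expansion n x y 0 = []"
| "a_edge_expansion n x y (Suc z) =
    (if heis_tree n ((x, y, int (Suc z)), False) then []
     else (basis_A34 n (nat ((y - 1 - x * int (Suc z)) mod int n)) (nat x) z, True) #
       a_edge_expansion n x ((y - x - 1) mod int n) z)"

definition edge_expansion :: "nat \<Rightarrow> (int \<times> int \<times> int) \<times> bool \<Rightarrow> (bool word \<times> bool) list" where
  "edge_expansion n e = (case e of ((x, y, z), g) \<Rightarrow>
     if g then
       (if heis_tree n e then [] else [(reduce (word_A2 n (nat x) (nat ((y + x) mod int n))), False)])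
     else if x = int n - 1 then
       word_inv (concat (map (\<lambda>t. a_edge_expansion n (int t) y (nat z)) [0..<n - 1])) @
         [(reduce (word_A1 n (nat z) (nat y)), False)]
     else a_edge_expansion n x y (nat z))"

lemma upt_split_last: "n \<ge> 1 \<Longrightarrow> [0..<n] = [0..<n - 1] @ [n - 1]"
  by (cases n) auto

context
  fixes n :: nat
  assumes n2: "n \<ge> 2"
begin

lemma edge_expansion_tree: "heis_tree n e \<Longrightarrow> edge_expansion n e = []"
proof -
  assume tree: "heis_tree n e"
  obtain x y z g where e: "e = ((x, y, z), g)" by (metis prod_cases3 surj_pair)
  show "edge_expansion n e = []"
  proof (cases g)
    case False
    with tree e n2 have "x \<noteq> int n - 1" "z = 0 \<or> (\<exists>z'. nat z = Suc z' \<and> heis_tree n ((x, y, int (Suc z')), False))"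
      by auto
    with e False show ?thesis by (auto simp: edge_expansion_def)
  qed (use tree e in \<open>simp add: edge_expansion_def\<close>)
qed

lemma word_subst_edge_expansion_edge_word [simp]:
  "word_subst (edge_expansion n) (heis.edge_word n e) = edge_expansion n e"
  by (simp add: heis.edge_word_def edge_expansion_tree)

lemma reduce_basis_A34_a_edge:
  assumes "0 \<le> x" "x \<le> int n - 2" "0 \<le> y" "y < int n" "z \<le> n - 2"
  shows "reduce (basis_A34 n (nat ((y - 1 - x * int (Suc z)) mod int n)) (nat x) z) =
    reduce (heis_schreier_gen n ((x, (y - x - 1) mod int n, int z), False) @
      word_inv (heis_schreier_gen n ((x, y, int (Suc z)), False)))"
proof -
  define k where "k = nat ((y - 1 - x * int (Suc z)) mod int n)"
  define y' where "y' = (y - x - 1) mod int n"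
  have k: "k \<le> n - 1" "int k = (y - 1 - x * int (Suc z)) mod int n" using n2 by (auto simp: k_def nat_le_iff)
  have "(int k + x * int z) mod int n = y'"
    unfolding k(2) y'_def by (simp add: mod_simps algebra_simps)
  moreover have "(y' + x + 1) mod int n = y"
    using assms(3,4) unfolding y'_def by (simp only: add.assoc mod_add_left_eq) simp
  ultimately show ?thesis
    unfolding k_def[symmetric] y'_def[symmetric]
    using reduce_basis_A34_schreier[OF n2 k(1), of "nat x" z] assms by (simp add: add.commute)
qed

lemma reduce_a_edge_expansion:
  assumes "0 \<le> x" "x \<le> int n - 2" "0 \<le> y" "y < int n" "z \<le> n - 1"
  shows "reduce (word_subst (\<lambda>s. s) (a_edge_expansion n x y z)) =
    reduce (heis_schreier_gen n ((x, y, int z), False))"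
  using assms(3-5)
proof (induction z arbitrary: y)
  case 0
  with assms(1,2) show ?case using heis_schreier_gen_tree[OF n2, of "(x, y, 0)" False] n2 by (simp add: heis_carrier)
next
  case (Suc z)
  have V: "(x, y, int (Suc z)) \<in> carrier (heis n)" using Suc.prems assms(1,2) by (auto simp: heis_carrier)
  show ?case
  proof (cases "heis_tree n ((x, y, int (Suc z)), False)")
    case True
    then show ?thesis using heis_schreier_gen_tree[OF n2 V] by simp
  next
    case nontree: False
    define k where "k = nat ((y - 1 - x * int (Suc z)) mod int n)"
    define y' where "y' = (y - x - 1) mod int n"
    have y': "0 \<le> y'" "y' < int n" using n2 by (auto simp: y'_def)
    have basis: "reduce (basis_A34 n k (nat x) z) = reduce (heis_schreier_gen n ((x, y', int z), False) @
        word_inv (heis_schreier_gen n ((x, y, int (Suc z)), False)))"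
      using reduce_basis_A34_a_edge[of x y z] assms(1,2) Suc.prems by (simp add: k_def y'_def)
    have IH: "reduce (word_subst (\<lambda>s. s) (a_edge_expansion n x y' z)) = reduce (heis_schreier_gen n ((x, y', int z), False))"
      using Suc.IH y' Suc.prems by simp
    have "a_edge_expansion n x y (Suc z) = (basis_A34 n k (nat x) z, True) # a_edge_expansion n x y' z"
      unfolding a_edge_expansion.simps(2) if_not_P[OF nontree] k_def y'_def ..
    then have "reduce (word_subst (\<lambda>s. s) (a_edge_expansion n x y (Suc z))) =
        reduce (word_inv (basis_A34 n k (nat x) z) @ word_subst (\<lambda>s. s) (a_edge_expansion n x y' z))"
      by (simp add: word_subst_Cons)
    also have "\<dots> = reduce (word_inv (heis_schreier_gen n ((x, y', int z), False) @
        word_inv (heis_schreier_gen n ((x, y, int (Suc z)), False))) @ heis_schreier_gen n ((x, y', int z), False))"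
      using basis IH by (intro reduce_append_cong reduce_word_inv_cong)
    also have "\<dots> = reduce (heis_schreier_gen n ((x, y, int (Suc z)), False))"
      by simp
    finally show ?thesis .
  qed
qed

lemma reduce_edge_expansion_last_column:
  assumes "0 \<le> y" "y < int n" "0 \<le> z" "z < int n"
  shows "reduce (word_subst (\<lambda>s. s) (edge_expansion n ((int n - 1, y, z), False))) =
    reduce (heis_schreier_gen n ((int n - 1, y, z), False))"
proof -
  let ?C = "concat (map (\<lambda>t. a_edge_expansion n (int t) y (nat z)) [0..<n - 1])"
  let ?S = "concat (map (\<lambda>t. heis_schreier_gen n ((int t, y, z), False)) [0..<n - 1])"
  let ?last = "heis_schreier_gen n ((int n - 1, y, z), False)"
  have C: "reduce (word_subst (\<lambda>s. s) ?C) = reduce ?S"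
    unfolding word_subst_concat_map
    using reduce_a_edge_expansion[of "int t" y "nat z" for t] assms
    by (intro reduce_concat_map_cong) auto
  have "reduce (reduce (word_A1 n (nat z) (nat y))) =
      reduce (concat (map (\<lambda>t. heis_schreier_gen n ((int t, y, z), False)) [0..<n]))"
    using reduce_word_A1_schreier[OF n2, of "nat z" "nat y"] assms by simp
  also have "\<dots> = reduce (?S @ ?last)"
    using n2 by (simp add: upt_split_last of_nat_diff)
  finally have A1: "reduce (reduce (word_A1 n (nat z) (nat y))) = reduce (?S @ ?last)" .
  have "reduce (word_subst (\<lambda>s. s) (edge_expansion n ((int n - 1, y, z), False))) =
      reduce (word_inv (word_subst (\<lambda>s. s) ?C) @ reduce (word_A1 n (nat z) (nat y)))"
    by (simp add: edge_expansion_def word_subst_word_inv)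
  also have "\<dots> = reduce (word_inv ?S @ ?S @ ?last)"
    using C A1 by (intro reduce_append_cong reduce_word_inv_cong) simp_all
  finally show ?thesis by simp
qed

lemma reduce_edge_expansion_b_edge:
  assumes "(x, y, z) \<in> carrier (heis n)" "\<not> heis_tree n ((x, y, z), True)"
  shows "reduce (word_subst (\<lambda>s. s) (edge_expansion n ((x, y, z), True))) =
    reduce (heis_schreier_gen n ((x, y, z), True))"
proof -
  have b: "0 \<le> x" "x < int n" "0 \<le> y" "y < int n" "z = int n - 1"
    using assms by (auto simp: heis_carrier)
  define k where "k = (y + x) mod int n"
  have step: "heis_step n (x, y, z) (True, False) = (x, k, 0)"
    using b by (simp add: heis_step_b k_def)
  have "int n = z + 1" using b(5) by simp
  then have "y - x * z = (y + x) + (- x) * int n" by (simp add: algebra_simps)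
  then have "(y - x * z) mod int n = k" unfolding k_def by (metis mod_mult_self1)
  moreover have "word_pow gen_b (n - 1) @ [(True, False)] = word_pow gen_b n"
    using n2 word_pow_Suc'[of gen_b "n - 1"] by (simp add: gen_b_def)
  moreover have "nat z = n - 1" using b by simp
  ultimately have "heis_schreier_gen n ((x, y, z), True) = word_A2 n (nat x) (nat k)"
    using step b by (simp add: heis.schreier_gen_def heis_transversal_def word_A2_def k_def)
  then show ?thesis
    using assms(2) by (simp add: edge_expansion_def k_def del: heis_tree.simps)
qed

lemma reduce_edge_expansion:
  assumes "v \<in> carrier (heis n)"
  shows "reduce (heis_schreier_gen n (v, g)) = reduce (word_subst (\<lambda>s. s) (edge_expansion n (v, g)))"
proof -
  obtain x y z where v: "v = (x, y, z)" by (metis prod_cases3)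
  have b: "0 \<le> x" "x < int n" "0 \<le> y" "y < int n" "0 \<le> z" "z < int n"
    using assms v by (auto simp: heis_carrier)
  show ?thesis
  proof (cases "heis_tree n (v, g)")
    case True
    then show ?thesis using heis_schreier_gen_tree[OF n2 assms] edge_expansion_tree by simp
  next
    case nontree: False
    show ?thesis
    proof (cases g)
      case True
      then show ?thesis using reduce_edge_expansion_b_edge assms nontree v by simp
    next
      case False
      show ?thesis
      proof (cases "x = int n - 1")
        case True
        then show ?thesis using reduce_edge_expansion_last_column[of y z] b v False by simp
      next
        case x: False
        then have "edge_expansion n (v, g) = a_edge_expansion n x y (nat z)"
          using v False by (simp add: edge_expansion_def)
        then show ?thesis using reduce_a_edge_expansion[of x y "nat z"] b x v False by simp
      qed
    qed
  qed
qed

end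

definition basis_A1 :: "nat \<Rightarrow> bool word set" where
  "basis_A1 n = {reduce (word_A1 n i k) | i k. i \<le> n - 1 \<and> k \<le> n - 1}"

definition basis_A2 :: "nat \<Rightarrow> bool word set" where
  "basis_A2 n = {reduce (word_A2 n i k) | i k. i \<le> n - 1 \<and> k \<le> n - 1}"

definition basis_A3 :: "nat \<Rightarrow> bool word set" where
  "basis_A3 n = {reduce (word_A34 (n - 1) i j 0) | i j. i \<le> n - 2 \<and> j \<le> n - 2}"

definition basis_A4 :: "nat \<Rightarrow> bool word set" where
  "basis_A4 n = {reduce (word_A34 k i j (k + 1)) | k i j.
     k \<le> n - 2 \<and> i \<le> n - 2 \<and> j \<le> n - 2 \<and> (i, j) \<noteq> (0, 0)}"

definition heis_basis :: "nat \<Rightarrow> bool word set" where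
  "heis_basis n = basis_A1 n \<union> basis_A2 n \<union> basis_A3 n \<union> basis_A4 n"

context
  fixes n :: nat
  assumes n2: "n \<ge> 2"
begin

lemma basis_A3_eq: "basis_A3 n = {basis_A34 n (n - 1) i j | i j. i \<le> n - 2 \<and> j \<le> n - 2}"
  using n2 by (simp add: basis_A3_def basis_A34_def)

lemma basis_A4_eq: "basis_A4 n = {basis_A34 n k i j | k i j.
    k \<le> n - 2 \<and> i \<le> n - 2 \<and> j \<le> n - 2 \<and> (i, j) \<noteq> (0, 0)}"
proof -
  have "Suc k mod n = k + 1" if "k \<le> n - 2" for k using that n2 by simp
  then show ?thesis unfolding basis_A4_def basis_A34_def by (metis (no_types, lifting))
qed

lemma basis_A34_in_heis_basis:
  assumes "k \<le> n - 1" "i \<le> n - 2" "j \<le> n - 2" "k = n - 1 \<or> (i, j) \<noteq> (0, 0)"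
  shows "basis_A34 n k i j \<in> heis_basis n"
proof (cases "k = n - 1")
  case True
  with assms show ?thesis by (auto simp: heis_basis_def basis_A3_eq)
next
  case False
  with assms have "k \<le> n - 2" "(i, j) \<noteq> (0, 0)" by auto
  with assms show ?thesis unfolding heis_basis_def basis_A4_eq by blast
qed

lemma a_edge_expansion_in_heis_basis:
  assumes "0 \<le> x" "x \<le> int n - 2" "0 \<le> y" "y < int n" "z \<le> n - 1"
  shows "fst ` set (a_edge_expansion n x y z) \<subseteq> heis_basis n"
  using assms(3-5)
proof (induction z arbitrary: y)
  case (Suc z)
  show ?case
  proof (cases "heis_tree n ((x, y, int (Suc z)), False)")
    case nontree: False
    define k where "k = nat ((y - 1 - x * int (Suc z)) mod int n)"
    have k: "k \<le> n - 1" using n2 by (simp add: k_def nat_le_iff)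
    have "k = n - 1" if "x = 0" "z = 0"
    proof -
      from nontree that have "y = 0" by simp
      with that n2 show ?thesis by (simp add: k_def zmod_minus1 nat_diff_distrib)
    qed
    then have "basis_A34 n k (nat x) z \<in> heis_basis n"
      using k assms(1,2) Suc.prems by (intro basis_A34_in_heis_basis) auto
    moreover have "fst ` set (a_edge_expansion n x ((y - x - 1) mod int n) z) \<subseteq> heis_basis n"
      using Suc.IH Suc.prems n2 by simp
    ultimately show ?thesis using nontree by (simp add: k_def)
  qed simp
qed simp

lemma edge_expansion_in_heis_basis:
  assumes "v \<in> carrier (heis n)"
  shows "fst ` set (edge_expansion n (v, g)) \<subseteq> heis_basis n"
proof -
  obtain x y z where v: "v = (x, y, z)" by (metis prod_cases3)
  have b: "0 \<le> x" "x < int n" "0 \<le> y" "y < int n" "0 \<le> z" "z < int n"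
    using assms v by (auto simp: heis_carrier)
  have "nat x \<le> n - 1" "nat ((y + x) mod int n) \<le> n - 1" "nat y \<le> n - 1" "nat z \<le> n - 1"
    using b n2 by (auto simp: nat_le_iff)
  then have "reduce (word_A2 n (nat x) (nat ((y + x) mod int n))) \<in> heis_basis n"
    and "reduce (word_A1 n (nat z) (nat y)) \<in> heis_basis n"
    unfolding heis_basis_def basis_A1_def basis_A2_def by blast+
  moreover have "fst ` set (concat (map (\<lambda>t. a_edge_expansion n (int t) y (nat z)) [0..<n - 1]))
      \<subseteq> heis_basis n"
  proof -
    have "fst ` set (a_edge_expansion n (int t) y (nat z)) \<subseteq> heis_basis n" if "t < n - 1" for t
      using a_edge_expansion_in_heis_basis that b by simp
    then show ?thesis by fastforce
  qed
  moreover have "fst ` set (a_edge_expansion n x y (nat z)) \<subseteq> heis_basis n" if "x \<noteq> int n - 1"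
    using a_edge_expansion_in_heis_basis that b by simp
  ultimately show ?thesis using v by (auto simp: edge_expansion_def)
qed

lemma retraction_A1:
  assumes "i \<le> n - 1" "k \<le> n - 1"
  shows "reduce (word_subst (edge_expansion n) (heis.schreier_rewrite n (0, 0, 0) (word_A1 n i k))) =
    [(reduce (word_A1 n i k), False)]"
proof -
  let ?C = "concat (map (\<lambda>t. a_edge_expansion n (int t) (int k) i) [0..<n - 1])"
  have "word_subst (edge_expansion n) (heis.schreier_rewrite n (0, 0, 0) (word_A1 n i k)) =
      concat (map (\<lambda>t. edge_expansion n ((int t, int k, int i), False)) [0..<n])"
    by (simp add: heis_walk_word_A1[OF n2 assms] word_subst_concat_map word_subst_edge_expansion_edge_word[OF n2])
  also have "\<dots> = concat (map (\<lambda>t. edge_expansion n ((int t, int k, int i), False)) [0..<n - 1]) @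
      edge_expansion n ((int (n - 1), int k, int i), False)"
    using n2 by (subst upt_split_last) simp_all
  also have "map (\<lambda>t. edge_expansion n ((int t, int k, int i), False)) [0..<n - 1] =
      map (\<lambda>t. a_edge_expansion n (int t) (int k) i) [0..<n - 1]"
    by (intro map_cong) (auto simp: edge_expansion_def)
  also have "edge_expansion n ((int (n - 1), int k, int i), False) =
      word_inv ?C @ [(reduce (word_A1 n i k), False)]"
    using n2 by (simp add: edge_expansion_def of_nat_diff)
  finally show ?thesis by (simp add: reduce_reduced)
qed

lemma retraction_A2:
  assumes "i \<le> n - 1" "k \<le> n - 1"
  shows "reduce (word_subst (edge_expansion n) (heis.schreier_rewrite n (0, 0, 0) (word_A2 n i k))) =
    [(reduce (word_A2 n i k), False)]"
proof -
  have "((int k + int i * (int n - 1)) mod int n + int i) mod int n = (int k + int i * int n) mod int n"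
    by (simp add: mod_simps algebra_simps)
  also have "\<dots> = int k" using assms n2 by simp
  finally show ?thesis
    using n2 by (simp add: heis_walk_word_A2[OF n2 assms] edge_expansion_def reduce_reduced)
qed

lemma retraction_A34:
  assumes "k \<le> n - 1" "i \<le> n - 2" "j \<le> n - 2" "k = n - 1 \<or> (i, j) \<noteq> (0, 0)"
  shows "reduce (word_subst (edge_expansion n)
      (heis.schreier_rewrite n (0, 0, 0) (word_A34 k i j (Suc k mod n)))) = [(basis_A34 n k i j, False)]"
proof -
  define y where "y = (int k + int i * int j) mod int n"
  define y' where "y' = (y + int i + 1) mod int n"
  have "int i \<noteq> int n - 1" using assms n2 by auto
  then have low: "edge_expansion n ((int i, y, int j), False) = a_edge_expansion n (int i) y j"
    by (simp add: edge_expansion_def)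
  have nontree: "\<not> heis_tree n ((int i, y', int (Suc j)), False)"
  proof
    assume "heis_tree n ((int i, y', int (Suc j)), False)"
    then have "i = 0" "j = 0" "y' \<noteq> 0" by auto
    moreover from this assms(4) have "int k + 1 = int n" using n2 by auto
    ultimately show False by (simp add: y'_def y_def mod_add_left_eq add.commute)
  qed
  have "(y' - 1 - int i * int (Suc j)) mod int n = (int k + int i * int j + (int i + 1) - (1 + int i * int (Suc j))) mod int n"
    unfolding y'_def y_def by (simp add: mod_simps algebra_simps)
  then have k: "nat ((y' - 1 - int i * int (Suc j)) mod int n) = k"
    using assms n2 by (simp add: algebra_simps)
  have "(y' - int i - 1) mod int n = ((y + (int i + 1)) mod int n - (int i + 1)) mod int n"
    by (simp add: y'_def algebra_simps)
  then have y: "(y' - int i - 1) mod int n = y" by (simp add: mod_diff_left_eq y_def)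
  have high: "edge_expansion n ((int i, y', int j + 1), False) =
      (basis_A34 n k i j, True) # a_edge_expansion n (int i) y j"
    using assms n2 nontree k y by (simp add: edge_expansion_def nat_add_distrib add.commute del: heis_tree.simps)
  show ?thesis
    using heis_walk_word_A34(2)[OF n2 assms(1-3) refl]
    by (simp add: y_def[symmetric] y'_def[symmetric] word_subst_word_inv low high letter_inv_def
        reduce_reduced word_subst_edge_expansion_edge_word[OF n2])
qed

end

context
  fixes n :: nat
  assumes n2: "n \<ge> 2"
begin

lemma heis_basis_obtain_loop:
  assumes "s \<in> heis_basis n"
  obtains w where "s = reduce w" "heis.walk n (0, 0, 0) w = (0, 0, 0)"
    "reduce (word_subst (edge_expansion n) (heis.schreier_rewrite n (0, 0, 0) w)) = [(s, False)]"
proof -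
  from assms consider "s \<in> basis_A1 n" | "s \<in> basis_A2 n" | "s \<in> basis_A3 n" | "s \<in> basis_A4 n"
    unfolding heis_basis_def by blast
  then show thesis
  proof cases
    case 1
    then obtain i k where "s = reduce (word_A1 n i k)" "i \<le> n - 1" "k \<le> n - 1"
      unfolding basis_A1_def by blast
    then show thesis using that heis_walk_word_A1[OF n2] retraction_A1[OF n2] by blast
  next
    case 2
    then obtain i k where "s = reduce (word_A2 n i k)" "i \<le> n - 1" "k \<le> n - 1"
      unfolding basis_A2_def by blast
    then show thesis using that heis_walk_word_A2[OF n2] retraction_A2[OF n2] by blast
  next
    case 3
    then obtain i j where "s = basis_A34 n (n - 1) i j" "i \<le> n - 2" "j \<le> n - 2"
      unfolding basis_A3_eq[OF n2] by blast
    then show thesis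
      using that[of "word_A34 (n - 1) i j (Suc (n - 1) mod n)"]
        heis_walk_word_A34[OF n2, of "n - 1" i j] retraction_A34[OF n2, of "n - 1" i j]
      by (simp add: basis_A34_def)
  next
    case 4
    then obtain k i j where "s = basis_A34 n k i j" "k \<le> n - 2" "i \<le> n - 2" "j \<le> n - 2" "(i, j) \<noteq> (0, 0)"
      unfolding basis_A4_eq[OF n2] by blast
    moreover from this have "k \<le> n - 1" by simp
    ultimately show thesis
      using that[of "word_A34 k i j (Suc k mod n)"]
        heis_walk_word_A34[OF n2, of k i j] retraction_A34[OF n2, of k i j]
      by (simp add: basis_A34_def)
  qed
qed

lemma heis_basis_retraction:
  assumes "s \<in> heis_basis n"
  shows "s \<in> carrier F2" and "heis.walk n (0, 0, 0) s = (0, 0, 0)"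
    and "reduce (word_subst (edge_expansion n) (heis.schreier_rewrite n (0, 0, 0) s)) = [(s, False)]"
proof -
  obtain w where s: "s = reduce w" and walk: "heis.walk n (0, 0, 0) w = (0, 0, 0)"
    and retr: "reduce (word_subst (edge_expansion n) (heis.schreier_rewrite n (0, 0, 0) w)) = [(s, False)]"
    using heis_basis_obtain_loop[OF assms] .
  show "s \<in> carrier F2" using s by (simp add: F2_carrier)
  show "heis.walk n (0, 0, 0) s = (0, 0, 0)"
    using s walk heis.walk_reduce[OF origin_in_heis[OF n2]] by simp
  show "reduce (word_subst (edge_expansion n) (heis.schreier_rewrite n (0, 0, 0) s)) = [(s, False)]"
    unfolding s using retr[unfolded s]
    by (simp only: heis.reduce_word_subst_schreier_rewrite_reduce[OF origin_in_heis[OF n2]])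
qed

lemma heis_basis_subset_carrier: "heis_basis n \<subseteq> carrier (free_group UNIV)"
  using heis_basis_retraction(1) by (auto simp: F2_def)

lemma free_basis_heis_basis: "free_basis F2 (heis_basis n)"
  unfolding F2_def
  by (rule heis.free_basis_if_retraction[OF origin_in_heis[OF n2] heis_basis_subset_carrier,
        where \<theta> = "edge_expansion n"])
    (simp_all add: heis_basis_retraction(2,3))

lemma loop_in_generate_heis_basis:
  assumes "w \<in> carrier F2" "heis.walk n (0, 0, 0) w = (0, 0, 0)"
  shows "w \<in> generate F2 (heis_basis n)"
  unfolding F2_def
proof (rule heis.loop_in_generate[where p = "heis_transversal n" and \<theta> = "edge_expansion n"])
  show "reduce (heis_transversal n v @ [(g, False)]) = reduce (heis_transversal n (heis_step n v (g, False)))"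
    if "v \<in> carrier (heis n)" "heis_tree n (v, g)" for v g
    using heis_transversal_tree[OF n2 that] .
  show "reduce (heis_schreier_gen n e) = reduce (word_subst (\<lambda>s. s) (edge_expansion n e))"
    and "fst ` set (edge_expansion n e) \<subseteq> heis_basis n" if "fst e \<in> carrier (heis n)" for e
    using reduce_edge_expansion[OF n2 that, of "snd e"] edge_expansion_in_heis_basis[OF n2 that, of "snd e"]
    by simp_all
qed (use assms n2 heis_basis_subset_carrier in \<open>simp_all add: F2_def\<close>)

end

section \<open>Counting the basis\<close>

lemma reduced_if_positive: "(\<And>l. l \<in> set w \<Longrightarrow> \<not> snd l) \<Longrightarrow> reduced w"
proof (induction w rule: induct_list012)
  case (3 x y w)
  have "\<not> snd x" "\<not> snd y" using "3.prems" by simp_all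
  then have "y \<noteq> letter_inv x" by (auto simp: letter_inv_def)
  moreover have "reduced (y # w)" using "3.prems" by (intro "3.IH"(2)) auto
  ultimately show ?case by simp
qed simp_all

text \<open>The last letter of the reduced rewriting distinguishes the basis elements.\<close>

definition lead_edge :: "nat \<Rightarrow> bool word \<Rightarrow> ((int \<times> int \<times> int) \<times> bool) \<times> bool" where
  "lead_edge n s = last (reduce (heis.schreier_rewrite n (0, 0, 0) s))"

definition index_A34 :: "nat \<Rightarrow> (nat \<times> nat \<times> nat) set" where
  "index_A34 n = {(k, i, j). k \<le> n - 1 \<and> i \<le> n - 2 \<and> j \<le> n - 2 \<and> (k = n - 1 \<or> (i, j) \<noteq> (0, 0))}"

context
  fixes n :: nat
  assumes n2: "n \<ge> 2"
begin

lemma lead_edge_reduce: "lead_edge n (reduce w) = last (reduce (heis.schreier_rewrite n (0, 0, 0) w))"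
  by (simp add: lead_edge_def heis.reduce_schreier_rewrite_reduce[OF origin_in_heis[OF n2]])

lemma lead_edge_A1:
  assumes "i \<le> n - 1" "k \<le> n - 1"
  shows "lead_edge n (reduce (word_A1 n i k)) = (((int n - 1, int k, int i), False), False)"
proof -
  let ?R = "concat (map (\<lambda>t. heis.edge_word n ((int t, int k, int i), False)) [0..<n])"
  have "reduced ?R" by (rule reduced_if_positive) (auto simp: heis.edge_word_def)
  moreover have "last ?R = (((int n - 1, int k, int i), False), False)"
    using n2 by (subst upt_split_last) (simp_all add: heis.edge_word_def of_nat_diff)
  ultimately show ?thesis by (simp add: lead_edge_reduce heis_walk_word_A1[OF n2 assms] reduce_reduced)
qed

lemma lead_edge_A2:
  assumes "i \<le> n - 1" "k \<le> n - 1"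
  shows "lead_edge n (reduce (word_A2 n i k)) =
    (((int i, (int k + int i * (int n - 1)) mod int n, int n - 1), True), False)"
  by (simp add: lead_edge_reduce heis_walk_word_A2[OF n2 assms] reduce_reduced)

lemma lead_edge_A34:
  assumes "k \<le> n - 1" "i \<le> n - 2" "j \<le> n - 2" "k = n - 1 \<or> (i, j) \<noteq> (0, 0)"
  shows "lead_edge n (basis_A34 n k i j) =
    (((int i, ((int k + int i * int j) mod int n + int i + 1) mod int n, int j + 1), False), True)"
proof -
  define y where "y = (int k + int i * int j) mod int n"
  define y' where "y' = (y + int i + 1) mod int n"
  have "\<not> heis_tree n ((int i, y', int j + 1), False)"
  proof
    assume "heis_tree n ((int i, y', int j + 1), False)"
    then have "i = 0" "j = 0" "y' \<noteq> 0" by auto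
    moreover from this assms(4) have "int k + 1 = int n" using n2 by auto
    ultimately show False by (simp add: y'_def y_def mod_add_left_eq add.commute)
  qed
  then have "heis.schreier_rewrite n (0, 0, 0) (word_A34 k i j (Suc k mod n)) =
      heis.edge_word n ((int i, y, int j), False) @ [(((int i, y', int j + 1), False), True)]"
    using heis_walk_word_A34(2)[OF n2 assms(1-3) refl]
    by (simp add: y_def[symmetric] y'_def[symmetric] heis.edge_word_def letter_inv_def del: heis_tree.simps)
  moreover have "reduced (heis.edge_word n ((int i, y, int j), False) @ [(((int i, y', int j + 1), False), True)])"
    by (auto simp: heis.edge_word_def letter_inv_def)
  ultimately show ?thesis by (simp add: basis_A34_def lead_edge_reduce reduce_reduced y_def y'_def)
qed

lemma mod_add_cancel_less:
  assumes "k < n" "k' < n" "(int k + c) mod int n = (int k' + c) mod int n"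
  shows "k = k'"
proof -
  from assms(3) have "int k mod int n = int k' mod int n" by (simp add: mod_eq_dvd_iff)
  with assms(1,2) show ?thesis by simp
qed

lemma inj_on_basis_A1: "inj_on (\<lambda>(i, k). reduce (word_A1 n i k)) ({..n - 1} \<times> {..n - 1})"
proof (rule inj_onI, clarify)
  fix i k i' k'
  assume idx: "i \<le> n - 1" "k \<le> n - 1" "i' \<le> n - 1" "k' \<le> n - 1"
    and "reduce (word_A1 n i k) = reduce (word_A1 n i' k')"
  then have "lead_edge n (reduce (word_A1 n i k)) = lead_edge n (reduce (word_A1 n i' k'))" by simp
  then show "i = i' \<and> k = k'" by (simp add: lead_edge_A1[OF idx(1,2)] lead_edge_A1[OF idx(3,4)])
qed

lemma inj_on_basis_A2: "inj_on (\<lambda>(i, k). reduce (word_A2 n i k)) ({..n - 1} \<times> {..n - 1})"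
proof (rule inj_onI, clarify)
  fix i k i' k'
  assume idx: "i \<le> n - 1" "k \<le> n - 1" "i' \<le> n - 1" "k' \<le> n - 1"
    and "reduce (word_A2 n i k) = reduce (word_A2 n i' k')"
  then have "lead_edge n (reduce (word_A2 n i k)) = lead_edge n (reduce (word_A2 n i' k'))" by simp
  then have "i = i'" and "(int k + int i * (int n - 1)) mod int n = (int k' + int i * (int n - 1)) mod int n"
    by (auto simp: lead_edge_A2[OF idx(1,2)] lead_edge_A2[OF idx(3,4)])
  moreover have "k = k'"
    using calculation(2) by (rule mod_add_cancel_less[rotated 2]) (use idx n2 in auto)
  ultimately show "i = i' \<and> k = k'" by simp
qed

lemma inj_on_basis_A34: "inj_on (\<lambda>(k, i, j). basis_A34 n k i j) (index_A34 n)"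
proof (rule inj_onI)
  fix x x' assume "x \<in> index_A34 n" "x' \<in> index_A34 n"
    and "(\<lambda>(k, i, j). basis_A34 n k i j) x = (\<lambda>(k, i, j). basis_A34 n k i j) x'"
  moreover obtain k i j k' i' j' where x: "x = (k, i, j)" "x' = (k', i', j')" by (metis prod_cases3)
  ultimately have "(k, i, j) \<in> index_A34 n" "(k', i', j') \<in> index_A34 n"
    and eq: "basis_A34 n k i j = basis_A34 n k' i' j'" by simp_all
  then have idx: "k \<le> n - 1" "i \<le> n - 2" "j \<le> n - 2" "k = n - 1 \<or> (i, j) \<noteq> (0, 0)"
    "k' \<le> n - 1" "i' \<le> n - 2" "j' \<le> n - 2" "k' = n - 1 \<or> (i', j') \<noteq> (0, 0)"
    by (simp_all add: index_A34_def)
  from eq have "lead_edge n (basis_A34 n k i j) = lead_edge n (basis_A34 n k' i' j')" by simp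
  then have ij: "i = i'" "j = j'"
    and y: "((int k + int i * int j) mod int n + int i + 1) mod int n =
      ((int k' + int i * int j) mod int n + int i + 1) mod int n"
    by (auto simp: lead_edge_A34[OF idx(1-4)] lead_edge_A34[OF idx(5-8)])
  from y have "(int k + (int i * int j + int i + 1)) mod int n =
      (int k' + (int i * int j + int i + 1)) mod int n"
    by (simp add: mod_simps add.assoc)
  then have "k = k'" by (rule mod_add_cancel_less[rotated 2]) (use idx n2 in auto)
  with ij x show "x = x'" by simp
qed

end

context
  fixes n :: nat
  assumes n2: "n \<ge> 2"
begin

lemma card_basis_A1: "card (basis_A1 n) = n ^ 2"
proof -
  have "basis_A1 n = (\<lambda>(i, k). reduce (word_A1 n i k)) ` ({..n - 1} \<times> {..n - 1})"
    by (auto simp: basis_A1_def image_iff)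
  then have "card (basis_A1 n) = card ({..n - 1} \<times> {..n - 1})"
    using card_image[OF inj_on_basis_A1[OF n2]] by simp
  then show ?thesis using n2 by (simp add: card_cartesian_product power2_eq_square)
qed

lemma card_basis_A2: "card (basis_A2 n) = n ^ 2"
proof -
  have "basis_A2 n = (\<lambda>(i, k). reduce (word_A2 n i k)) ` ({..n - 1} \<times> {..n - 1})"
    by (auto simp: basis_A2_def image_iff)
  then have "card (basis_A2 n) = card ({..n - 1} \<times> {..n - 1})"
    using card_image[OF inj_on_basis_A2[OF n2]] by simp
  then show ?thesis using n2 by (simp add: card_cartesian_product power2_eq_square)
qed

lemma basis_A3_image: "basis_A3 n = (\<lambda>(k, i, j). basis_A34 n k i j) ` ({n - 1} \<times> {..n - 2} \<times> {..n - 2})"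
proof (intro equalityI subsetI)
  fix s assume "s \<in> basis_A3 n"
  then obtain i j where "s = basis_A34 n (n - 1) i j" "i \<le> n - 2" "j \<le> n - 2"
    unfolding basis_A3_eq[OF n2] by blast
  then show "s \<in> (\<lambda>(k, i, j). basis_A34 n k i j) ` ({n - 1} \<times> {..n - 2} \<times> {..n - 2})"
    by (intro image_eqI[of _ _ "(n - 1, i, j)"]) auto
qed (auto simp: basis_A3_eq[OF n2])

lemma basis_A4_image:
  "basis_A4 n = (\<lambda>(k, i, j). basis_A34 n k i j) ` ({..n - 2} \<times> ({..n - 2} \<times> {..n - 2} - {(0, 0)}))"
proof (intro equalityI subsetI)
  fix s assume "s \<in> basis_A4 n"
  then obtain k i j where "s = basis_A34 n k i j" "k \<le> n - 2" "i \<le> n - 2" "j \<le> n - 2" "(i, j) \<noteq> (0, 0)"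
    unfolding basis_A4_eq[OF n2] by blast
  then show "s \<in> (\<lambda>(k, i, j). basis_A34 n k i j) ` ({..n - 2} \<times> ({..n - 2} \<times> {..n - 2} - {(0, 0)}))"
    by (intro image_eqI[of _ _ "(k, i, j)"]) auto
qed (auto simp: basis_A4_eq[OF n2])

lemma index_A3_subset: "{n - 1} \<times> {..n - 2} \<times> {..n - 2} \<subseteq> index_A34 n"
  and index_A4_subset: "{..n - 2} \<times> ({..n - 2} \<times> {..n - 2} - {(0, 0)}) \<subseteq> index_A34 n"
  using n2 by (auto simp: index_A34_def)

lemma card_basis_A3: "card (basis_A3 n) = (n - 1) ^ 2"
proof -
  have "card (basis_A3 n) = card ({n - 1} \<times> {..n - 2} \<times> {..n - 2})"
    unfolding basis_A3_image by (rule card_image[OF inj_on_subset[OF inj_on_basis_A34[OF n2] index_A3_subset]])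
  moreover obtain m where "n = Suc (Suc m)" using n2 by (metis add_2_eq_Suc le_Suc_ex)
  ultimately show ?thesis by (simp add: card_cartesian_product power2_eq_square)
qed

lemma card_basis_A4: "card (basis_A4 n) = (n - 1) ^ 3 - (n - 1)"
proof -
  have "card (basis_A4 n) = card ({..n - 2} \<times> ({..n - 2} \<times> {..n - 2} - {(0, 0)}))"
    unfolding basis_A4_image by (rule card_image[OF inj_on_subset[OF inj_on_basis_A34[OF n2] index_A4_subset]])
  also obtain m where m: "n = Suc (Suc m)" using n2 by (metis add_2_eq_Suc le_Suc_ex)
  then have "card ({..n - 2} \<times> ({..n - 2} \<times> {..n - 2} - {(0, 0)})) = Suc m * (Suc m * Suc m - 1)"
    by (simp add: card_cartesian_product card_Diff_singleton)
  also have "\<dots> = (n - 1) ^ 3 - (n - 1)"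
    using m by (simp only: right_diff_distrib' power3_eq_cube mult_1_right diff_Suc_Suc diff_Suc_1)
  finally show ?thesis .
qed

end

context
  fixes n :: nat
  assumes n2: "n \<ge> 2"
begin

lemma lead_edge_basis_A1: "s \<in> basis_A1 n \<Longrightarrow> \<not> snd (fst (lead_edge n s)) \<and> \<not> snd (lead_edge n s)"
  by (auto simp: basis_A1_def lead_edge_A1[OF n2])

lemma lead_edge_basis_A2: "s \<in> basis_A2 n \<Longrightarrow> snd (fst (lead_edge n s)) \<and> \<not> snd (lead_edge n s)"
  by (auto simp: basis_A2_def lead_edge_A2[OF n2])

lemma lead_edge_basis_A34: "s \<in> basis_A3 n \<union> basis_A4 n \<Longrightarrow> snd (lead_edge n s)"
  using n2 by (auto simp: basis_A3_eq[OF n2] basis_A4_eq[OF n2] lead_edge_A34[OF n2])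

lemma basis_A3_A4_disjoint: "basis_A3 n \<inter> basis_A4 n = {}"
proof -
  have "basis_A3 n \<inter> basis_A4 n = (\<lambda>(k, i, j). basis_A34 n k i j) `
      ({n - 1} \<times> {..n - 2} \<times> {..n - 2} \<inter> {..n - 2} \<times> ({..n - 2} \<times> {..n - 2} - {(0, 0)}))"
    unfolding basis_A3_image[OF n2] basis_A4_image[OF n2]
    by (rule inj_on_image_Int[OF inj_on_basis_A34[OF n2] index_A3_subset[OF n2] index_A4_subset[OF n2], symmetric])
  also have "\<dots> = {}" using n2 by auto
  finally show ?thesis .
qed

lemma card_heis_basis: "card (heis_basis n) = n ^ 3 + 1"
proof -
  have fin: "finite (basis_A1 n)" "finite (basis_A2 n)" "finite (basis_A3 n)" "finite (basis_A4 n)"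
    using card_basis_A1[OF n2] card_basis_A2[OF n2] card_basis_A3[OF n2] basis_A4_image[OF n2] n2
    by (auto intro: card_ge_0_finite)
  have "basis_A1 n \<inter> basis_A2 n = {}" "(basis_A1 n \<union> basis_A2 n) \<inter> basis_A3 n = {}"
    "(basis_A1 n \<union> basis_A2 n \<union> basis_A3 n) \<inter> basis_A4 n = {}"
    using lead_edge_basis_A1 lead_edge_basis_A2 lead_edge_basis_A34 basis_A3_A4_disjoint by blast+
  then have "card (heis_basis n) = n ^ 2 + n ^ 2 + (n - 1) ^ 2 + ((n - 1) ^ 3 - (n - 1))"
    using fin by (simp add: heis_basis_def card_Un_disjoint card_basis_A1[OF n2] card_basis_A2[OF n2]
        card_basis_A3[OF n2] card_basis_A4[OF n2])
  also obtain m where m: "n = Suc m" "m \<ge> 1" using n2 by (cases n) auto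
  then have "n ^ 2 + n ^ 2 + (n - 1) ^ 2 + ((n - 1) ^ 3 - (n - 1)) = n ^ 3 + 1"
    by (simp add: power2_eq_square power3_eq_cube algebra_simps) (use le_square[of m] in linarith)
  finally show ?thesis .
qed

end

lemma kernel_heis_eq_loops:
  assumes "n \<ge> 2" and "h \<in> hom F2 (heis n)" "h gen_a = heis_alpha" "h gen_b = heis_beta"
  shows "kernel F2 (heis n) h = {w \<in> carrier F2. heis.walk n (0, 0, 0) w = (0, 0, 0)}"
  using hom_eq_heis_walk[OF assms] by (auto simp: kernel_def heis_one)

lemma kernel_heis_freely_generated:
  assumes n2: "n \<ge> 2" and h: "h \<in> hom F2 (heis n)" "h gen_a = heis_alpha" "h gen_b = heis_beta"
  shows "freely_generated_by F2 (kernel F2 (heis n) h) (heis_basis n)"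
proof -
  interpret group_hom F2 "heis n" h
    using h n2 group_heis[of n] by (simp add: group_hom_def group_hom_axioms_def F2.group_axioms)
  have "heis_basis n \<subseteq> kernel F2 (heis n) h"
    using heis_basis_retraction(1,2)[OF n2] by (auto simp: kernel_heis_eq_loops[OF assms])
  then have "generate F2 (heis_basis n) \<subseteq> kernel F2 (heis n) h"
    by (rule F2.generate_subgroup_incl[OF _ subgroup_kernel])
  moreover have "kernel F2 (heis n) h \<subseteq> generate F2 (heis_basis n)"
    using loop_in_generate_heis_basis[OF n2] by (auto simp: kernel_heis_eq_loops[OF assms])
  ultimately show ?thesis
    by (simp add: freely_generated_by_def free_basis_heis_basis[OF n2] subset_antisym)
qed

theorem lemma2p10:
  fixes n :: nat and h :: "bool word \<Rightarrow> int \<times> int \<times> int"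
  assumes "n \<ge> 2"
    and "h \<in> hom F2 (heis n)"
    and "h gen_a = heis_alpha" and "h gen_b = heis_beta"
  defines "T \<equiv> commutator F2 gen_a gen_b"
  defines "A1 \<equiv> {T [^]\<^bsub>F2\<^esub> k \<otimes>\<^bsub>F2\<^esub> conjugate F2 (gen_a [^]\<^bsub>F2\<^esub> n) (gen_b [^]\<^bsub>F2\<^esub> i)
                  \<otimes>\<^bsub>F2\<^esub> inv\<^bsub>F2\<^esub> (T [^]\<^bsub>F2\<^esub> k) | i k :: nat. i \<le> n - 1 \<and> k \<le> n - 1}"
  defines "A2 \<equiv> {T [^]\<^bsub>F2\<^esub> k \<otimes>\<^bsub>F2\<^esub> conjugate F2 (gen_b [^]\<^bsub>F2\<^esub> n) (gen_a [^]\<^bsub>F2\<^esub> i)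
                  \<otimes>\<^bsub>F2\<^esub> inv\<^bsub>F2\<^esub> (T [^]\<^bsub>F2\<^esub> k) | i k :: nat. i \<le> n - 1 \<and> k \<le> n - 1}"
  defines "A3 \<equiv> {T [^]\<^bsub>F2\<^esub> (n - 1) \<otimes>\<^bsub>F2\<^esub>
                  conjugate F2 T (gen_a [^]\<^bsub>F2\<^esub> i \<otimes>\<^bsub>F2\<^esub> gen_b [^]\<^bsub>F2\<^esub> j)
                  | i j :: nat. i \<le> n - 2 \<and> j \<le> n - 2}"
  defines "A4 \<equiv> {T [^]\<^bsub>F2\<^esub> k \<otimes>\<^bsub>F2\<^esub>
                  conjugate F2 T (gen_a [^]\<^bsub>F2\<^esub> i \<otimes>\<^bsub>F2\<^esub> gen_b [^]\<^bsub>F2\<^esub> j)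
                  \<otimes>\<^bsub>F2\<^esub> inv\<^bsub>F2\<^esub> (T [^]\<^bsub>F2\<^esub> (k + 1))
                  | k i j :: nat. k \<le> n - 2 \<and> i \<le> n - 2 \<and> j \<le> n - 2 \<and> (i, j) \<noteq> (0, 0)}"
  shows "freely_generated_by F2 (kernel F2 (heis n) h) (A1 \<union> A2 \<union> A3 \<union> A4)
         \<and> card A1 = n ^ 2 \<and> card A2 = n ^ 2 \<and> card A3 = (n - 1) ^ 2
         \<and> card A4 = (n - 1) ^ 3 - (n - 1)
         \<and> card (A1 \<union> A2 \<union> A3 \<union> A4) = n ^ 3 + 1"
proof -
  have "A1 = basis_A1 n" "A2 = basis_A2 n" "A3 = basis_A3 n"
    unfolding A1_def A2_def A3_def T_def basis_A1_def basis_A2_def basis_A3_def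
      reduce_word_A1 reduce_word_A2 reduce_word_A3 by (rule refl)+
  moreover have "A4 = basis_A4 n"
    unfolding A4_def T_def basis_A4_def reduce_word_A4 ..
  ultimately show ?thesis
    using kernel_heis_freely_generated[OF assms(1-4)] card_heis_basis[OF assms(1)]
      card_basis_A1[OF assms(1)] card_basis_A2[OF assms(1)] card_basis_A3[OF assms(1)] card_basis_A4[OF assms(1)]
    by (simp add: heis_basis_def)
qed

end
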